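(* Let $\mathsf{K}$ be a variety of Heyting algebras or a variety of implicative semilattices. Then for every $\mathbf{B}\in\mathsf{K}$ and every proper subalgebra $\mathbf{A}\leq\mathbf{B}$ there exist two distinct congruences $\theta,\phi$ of $\mathbf{B}$ with $\theta{\upharpoonright}_A=\phi{\upharpoonright}_A$. Consequently, $\mathsf{K}$ has the weak ES property.
   Context: Implicative semilattices are the $\langle\wedge,\to\rangle$-subreducts of Heyting algebras. $\theta{\upharpoonright}_A=\theta\cap(A\times A)$. A variety $\mathsf{K}$ has the weak ES property if every $\mathsf{K}$-epimorphism (homomorphism $f\colon\mathbf{A}\to\mathbf{B}$ in $\mathsf{K}$ with $g\circ f=h\circ f\Rightarrow g=h$ for all homomorphisms $g,h$ from $\mathbf{B}$ into members of $\mathsf{K}$) between finitely generated members of $\mathsf{K}$ is surjective. *)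

theory Defs
  imports Main
begin

datatype 'f trm = TVar nat | TFn 'f "'f trm list"

text \<open>An algebra: a carrier and an interpretation of every operation symbol as a
function on argument lists (only lists of the correct arity inside the carrier matter).\<close>
record ('f, 'a) alg =
  carrier :: "'a set"
  ops :: "'f \<Rightarrow> 'a list \<Rightarrow> 'a"

definition algebra :: "('f \<Rightarrow> nat) \<Rightarrow> ('f, 'a) alg \<Rightarrow> bool" where
  "algebra ar A \<longleftrightarrow>
     (\<forall>f xs. length xs = ar f \<longrightarrow> set xs \<subseteq> carrier A \<longrightarrow> ops A f xs \<in> carrier A)"

fun wf_trm :: "('f \<Rightarrow> nat) \<Rightarrow> 'f trm \<Rightarrow> bool" where
  "wf_trm ar (TVar n) = True"
| "wf_trm ar (TFn f ts) = (length ts = ar f \<and> (\<forall>t\<in>set ts. wf_trm ar t))"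

definition wf_eqs :: "('f \<Rightarrow> nat) \<Rightarrow> ('f trm \<times> 'f trm) set \<Rightarrow> bool" where
  "wf_eqs ar E \<longleftrightarrow> (\<forall>(s, t)\<in>E. wf_trm ar s \<and> wf_trm ar t)"

fun eval :: "('f, 'a) alg \<Rightarrow> (nat \<Rightarrow> 'a) \<Rightarrow> 'f trm \<Rightarrow> 'a" where
  "eval A \<rho> (TVar n) = \<rho> n"
| "eval A \<rho> (TFn f ts) = ops A f (map (eval A \<rho>) ts)"

definition satisfies :: "('f, 'a) alg \<Rightarrow> 'f trm \<times> 'f trm \<Rightarrow> bool" where
  "satisfies A e \<longleftrightarrow>
     (\<forall>\<rho>. (\<forall>n. \<rho> n \<in> carrier A) \<longrightarrow> eval A \<rho> (fst e) = eval A \<rho> (snd e))"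

definition subalg :: "('f \<Rightarrow> nat) \<Rightarrow> 'a set \<Rightarrow> ('f, 'a) alg \<Rightarrow> bool" where
  "subalg ar S B \<longleftrightarrow> S \<subseteq> carrier B \<and>
     (\<forall>f xs. length xs = ar f \<longrightarrow> set xs \<subseteq> S \<longrightarrow> ops B f xs \<in> S)"

definition congruence :: "('f \<Rightarrow> nat) \<Rightarrow> ('f, 'a) alg \<Rightarrow> ('a \<times> 'a) set \<Rightarrow> bool" where
  "congruence ar B \<theta> \<longleftrightarrow> equiv (carrier B) \<theta> \<and>
     (\<forall>f xs ys. length xs = ar f \<longrightarrow> length ys = ar f \<longrightarrow>
        list_all2 (\<lambda>x y. (x, y) \<in> \<theta>) xs ys \<longrightarrow> (ops B f xs, ops B f ys) \<in> \<theta>)"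

definition restr :: "('a \<times> 'a) set \<Rightarrow> 'a set \<Rightarrow> ('a \<times> 'a) set" where
  "restr \<theta> S = \<theta> \<inter> (S \<times> S)"

definition hom :: "('f \<Rightarrow> nat) \<Rightarrow> ('a \<Rightarrow> 'b) \<Rightarrow> ('f, 'a) alg \<Rightarrow> ('f, 'b) alg \<Rightarrow> bool" where
  "hom ar h A C \<longleftrightarrow> h ` carrier A \<subseteq> carrier C \<and>
     (\<forall>f xs. length xs = ar f \<longrightarrow> set xs \<subseteq> carrier A \<longrightarrow> h (ops A f xs) = ops C f (map h xs))"

definition Sg :: "('f \<Rightarrow> nat) \<Rightarrow> ('f, 'a) alg \<Rightarrow> 'a set \<Rightarrow> 'a set" where
  "Sg ar A X = \<Inter>{S. subalg ar S A \<and> X \<subseteq> S}"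

definition fin_gen :: "('f \<Rightarrow> nat) \<Rightarrow> ('f, 'a) alg \<Rightarrow> bool" where
  "fin_gen ar A \<longleftrightarrow> (\<exists>X. finite X \<and> X \<subseteq> carrier A \<and> Sg ar A X = carrier A)"

text \<open>K-epimorphism, where K is a class of algebras with universes in type 'c.
Homomorphisms are compared on the carrier of their domain.\<close>
definition epi :: "('f \<Rightarrow> nat) \<Rightarrow> (('f, 'c) alg \<Rightarrow> bool) \<Rightarrow> ('a \<Rightarrow> 'b)
                   \<Rightarrow> ('f, 'a) alg \<Rightarrow> ('f, 'b) alg \<Rightarrow> bool" where
  "epi ar K f A B \<longleftrightarrow> hom ar f A B \<and>
     (\<forall>(g :: 'b \<Rightarrow> 'c) h C. K C \<longrightarrow> hom ar g B C \<longrightarrow> hom ar h B C \<longrightarrow>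
        (\<forall>a\<in>carrier A. g (f a) = h (f a)) \<longrightarrow> (\<forall>b\<in>carrier B. g b = h b))"

datatype hsym = HMeet | HJoin | HImp | HBot | HTop

fun har :: "hsym \<Rightarrow> nat" where
  "har HMeet = 2" | "har HJoin = 2" | "har HImp = 2" | "har HBot = 0" | "har HTop = 0"

definition heyting_algebra :: "(hsym, 'a) alg \<Rightarrow> bool" where
  "heyting_algebra A \<longleftrightarrow> algebra har A \<and>
    (let M = (\<lambda>x y. ops A HMeet [x, y]); J = (\<lambda>x y. ops A HJoin [x, y]);
         I = (\<lambda>x y. ops A HImp [x, y]); z = ops A HBot []; u = ops A HTop [];
         le = (\<lambda>x y. M x y = x) in
     \<forall>x\<in>carrier A. \<forall>y\<in>carrier A. \<forall>w\<in>carrier A.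
        M x (M y w) = M (M x y) w \<and> J x (J y w) = J (J x y) w \<and>
        M x y = M y x \<and> J x y = J y x \<and>
        M x (J x y) = x \<and> J x (M x y) = x \<and>
        M z x = z \<and> M u x = x \<and>
        (le (M w x) y \<longleftrightarrow> le w (I x y)))"

definition HVar :: "(hsym trm \<times> hsym trm) set \<Rightarrow> (hsym, 'a) alg \<Rightarrow> bool" where
  "HVar E A \<longleftrightarrow> heyting_algebra A \<and> (\<forall>e\<in>E. satisfies A e)"

datatype isym = IMeet | IImp | ITop

fun iar :: "isym \<Rightarrow> nat" where
  "iar IMeet = 2" | "iar IImp = 2" | "iar ITop = 0"

definition implicative_semilattice :: "(isym, 'a) alg \<Rightarrow> bool" where
  "implicative_semilattice A \<longleftrightarrow> algebra iar A \<and>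
    (let M = (\<lambda>x y. ops A IMeet [x, y]); I = (\<lambda>x y. ops A IImp [x, y]);
         u = ops A ITop []; le = (\<lambda>x y. M x y = x) in
     \<forall>x\<in>carrier A. \<forall>y\<in>carrier A. \<forall>w\<in>carrier A.
        M x (M y w) = M (M x y) w \<and> M x y = M y x \<and> M x x = x \<and> M u x = x \<and>
        (le (M w x) y \<longleftrightarrow> le w (I x y)))"

definition IVar :: "(isym trm \<times> isym trm) set \<Rightarrow> (isym, 'a) alg \<Rightarrow> bool" where
  "IVar E A \<longleftrightarrow> implicative_semilattice A \<and> (\<forall>e\<in>E. satisfies A e)"

end

theory Submission
  imports Defs "HOL-Library.Countable_Set" "HOL-Library.Countable"
begin

text \<open>Let \<open>\<psi>\<close> be a congruence of an implicative semilattice \<open>B\<close>, \<open>S\<close> a subuniverse and \<open>b\<close> an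
  element that is not \<open>\<psi>\<close>-equivalent to any element of \<open>S\<close>. Identifying \<open>b\<close> with \<open>\<top>\<close> yields the
  congruence \<open>x \<sqinter> b \<equiv>\<^sub>\<psi> y \<sqinter> b\<close>; identifying with \<open>\<top>\<close> only the elements of \<open>S\<close> lying above \<open>b\<close>
  modulo \<open>\<psi>\<close> yields a second one. They agree on \<open>S\<close>, because for \<open>x, y \<in> S\<close> the element
  \<open>(x \<leadsto> y) \<sqinter> (y \<leadsto> x)\<close> of \<open>S\<close> lies above \<open>b\<close> as soon as \<open>x \<sqinter> b \<equiv>\<^sub>\<psi> y \<sqinter> b\<close>; but only the
  first identifies \<open>b\<close> with \<open>\<top>\<close>. Both respect joins, so the construction also works for Heyting
  algebras, and with \<open>\<psi>\<close> the identity it gives the first claim.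

  For the weak ES property let \<open>f : A \<rightarrow> B\<close> be an epimorphism with \<open>S = f[A] \<noteq> B\<close>. As \<open>B\<close> is
  finitely generated, Zorn's lemma gives a congruence \<open>\<psi>\<close> maximal among those for which the
  \<open>\<psi>\<close>-saturation of \<open>S\<close> is proper. One of the two congruences above \<open>\<psi>\<close> is strictly bigger than
  \<open>\<psi>\<close>, so it saturates \<open>S\<close> to all of \<open>B\<close>, and this is incompatible with \<open>f\<close> being an
  epimorphism. Since \<open>B\<close> is countable, test algebras with universe in any infinite type suffice.\<close>

section \<open>Implicative semilattices and implicative lattices\<close>

locale semilattice_top_on =
  fixes A :: "'a set" and meet :: "'a \<Rightarrow> 'a \<Rightarrow> 'a" (infixl \<open>\<sqinter>\<close> 70) and top :: 'a (\<open>\<top>\<close>)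
  assumes meet_closed: "x \<in> A \<Longrightarrow> y \<in> A \<Longrightarrow> x \<sqinter> y \<in> A"
    and top_closed: "\<top> \<in> A"
    and meet_assoc: "x \<in> A \<Longrightarrow> y \<in> A \<Longrightarrow> w \<in> A \<Longrightarrow> x \<sqinter> (y \<sqinter> w) = x \<sqinter> y \<sqinter> w"
    and meet_comm: "x \<in> A \<Longrightarrow> y \<in> A \<Longrightarrow> x \<sqinter> y = y \<sqinter> x"
    and meet_idem: "x \<in> A \<Longrightarrow> x \<sqinter> x = x"
    and top_meet: "x \<in> A \<Longrightarrow> \<top> \<sqinter> x = x"
begin

definition le :: "'a \<Rightarrow> 'a \<Rightarrow> bool" (infix \<open>\<sqsubseteq>\<close> 50) where
  "x \<sqsubseteq> y \<longleftrightarrow> x \<sqinter> y = x"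

lemma meet_top: "x \<in> A \<Longrightarrow> x \<sqinter> \<top> = x"
  using meet_comm top_meet top_closed by metis

lemma le_refl: "x \<in> A \<Longrightarrow> x \<sqsubseteq> x"
  by (simp add: le_def meet_idem)

lemma le_trans: "x \<in> A \<Longrightarrow> y \<in> A \<Longrightarrow> w \<in> A \<Longrightarrow> x \<sqsubseteq> y \<Longrightarrow> y \<sqsubseteq> w \<Longrightarrow> x \<sqsubseteq> w"
  unfolding le_def by (metis meet_assoc)

lemma le_antisym: "x \<in> A \<Longrightarrow> y \<in> A \<Longrightarrow> x \<sqsubseteq> y \<Longrightarrow> y \<sqsubseteq> x \<Longrightarrow> x = y"
  unfolding le_def by (metis meet_comm)

lemma meet_le1: "x \<in> A \<Longrightarrow> y \<in> A \<Longrightarrow> x \<sqinter> y \<sqsubseteq> x"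
  unfolding le_def by (metis meet_assoc meet_comm meet_idem)

lemma meet_le2: "x \<in> A \<Longrightarrow> y \<in> A \<Longrightarrow> x \<sqinter> y \<sqsubseteq> y"
  unfolding le_def by (metis meet_assoc meet_idem)

lemma le_meetI: "x \<in> A \<Longrightarrow> y \<in> A \<Longrightarrow> w \<in> A \<Longrightarrow> w \<sqsubseteq> x \<Longrightarrow> w \<sqsubseteq> y \<Longrightarrow> w \<sqsubseteq> x \<sqinter> y"
  unfolding le_def by (metis meet_assoc)

lemma le_meet_iff: "x \<in> A \<Longrightarrow> y \<in> A \<Longrightarrow> w \<in> A \<Longrightarrow> w \<sqsubseteq> x \<sqinter> y \<longleftrightarrow> w \<sqsubseteq> x \<and> w \<sqsubseteq> y"
  by (meson meet_closed le_meetI meet_le1 meet_le2 le_trans)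

lemma le_top: "x \<in> A \<Longrightarrow> x \<sqsubseteq> \<top>"
  by (simp add: le_def meet_top)

lemma eq_iff_same_lower_bounds:
  "x \<in> A \<Longrightarrow> y \<in> A \<Longrightarrow> (\<And>w. w \<in> A \<Longrightarrow> w \<sqsubseteq> x \<longleftrightarrow> w \<sqsubseteq> y) \<Longrightarrow> x = y"
  by (meson le_antisym le_refl)

lemma meet_right_distrib: "x \<in> A \<Longrightarrow> y \<in> A \<Longrightarrow> c \<in> A \<Longrightarrow> x \<sqinter> y \<sqinter> c = (x \<sqinter> c) \<sqinter> (y \<sqinter> c)"
  by (metis meet_assoc meet_comm meet_idem meet_closed)

end

locale implicative_semilattice_on = semilattice_top_on +
  fixes imp :: "'a \<Rightarrow> 'a \<Rightarrow> 'a" (infixr \<open>\<leadsto>\<close> 60)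
  assumes imp_closed: "x \<in> A \<Longrightarrow> y \<in> A \<Longrightarrow> x \<leadsto> y \<in> A"
    and residuation: "x \<in> A \<Longrightarrow> y \<in> A \<Longrightarrow> w \<in> A \<Longrightarrow> w \<sqinter> x \<sqsubseteq> y \<longleftrightarrow> w \<sqsubseteq> x \<leadsto> y"
begin

lemma meet_imp: "x \<in> A \<Longrightarrow> y \<in> A \<Longrightarrow> x \<sqinter> (x \<leadsto> y) = x \<sqinter> y"
  by (rule eq_iff_same_lower_bounds)
    (auto simp: meet_closed imp_closed le_meet_iff residuation[symmetric] le_def[of _ x])

lemma meet_imp_absorb: "x \<in> A \<Longrightarrow> y \<in> A \<Longrightarrow> y \<sqinter> (x \<leadsto> y) = y"
  using residuation[of x y y] meet_le1[of y x] by (simp add: le_def)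

lemma imp_meet_distrib: "x \<in> A \<Longrightarrow> y \<in> A \<Longrightarrow> w \<in> A \<Longrightarrow> x \<leadsto> y \<sqinter> w = (x \<leadsto> y) \<sqinter> (x \<leadsto> w)"
  by (rule eq_iff_same_lower_bounds) (simp_all add: imp_closed meet_closed le_meet_iff residuation[symmetric])

lemma imp_self: "x \<in> A \<Longrightarrow> x \<leadsto> x = \<top>"
  using residuation[of x x \<top>] meet_le2[of \<top> x] le_top[of "x \<leadsto> x"]
  by (simp add: le_antisym imp_closed top_closed)

lemma meet_biimp:
  assumes x: "x \<in> A" and y: "y \<in> A"
  shows "x \<sqinter> ((x \<leadsto> y) \<sqinter> (y \<leadsto> x)) = x \<sqinter> y"
proof -
  have "x \<sqinter> ((x \<leadsto> y) \<sqinter> (y \<leadsto> x)) = x \<sqinter> y \<sqinter> (y \<leadsto> x)"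
    using assms by (simp add: meet_assoc meet_imp imp_closed)
  also have "\<dots> = x \<sqinter> (y \<sqinter> x)"
    using assms by (simp add: meet_assoc[symmetric] meet_imp imp_closed)
  also have "\<dots> = x \<sqinter> y"
    using assms by (metis meet_assoc meet_comm meet_idem)
  finally show ?thesis .
qed

lemma imp_meet_restrict:
  assumes x: "x \<in> A" and y: "y \<in> A" and c: "c \<in> A"
  shows "(x \<leadsto> y) \<sqinter> c = (x \<sqinter> c \<leadsto> y \<sqinter> c) \<sqinter> c"
proof (rule eq_iff_same_lower_bounds)
  show "(x \<leadsto> y) \<sqinter> c \<in> A" "(x \<sqinter> c \<leadsto> y \<sqinter> c) \<sqinter> c \<in> A"
    using assms by (simp_all add: meet_closed imp_closed)
  fix w assume w: "w \<in> A"
  show "w \<sqsubseteq> (x \<leadsto> y) \<sqinter> c \<longleftrightarrow> w \<sqsubseteq> (x \<sqinter> c \<leadsto> y \<sqinter> c) \<sqinter> c"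
  proof (cases "w \<sqsubseteq> c")
    case True
    have "w \<sqinter> (x \<sqinter> c) = w \<sqinter> c \<sqinter> x"
      using meet_assoc[of w c x] meet_comm[of x c] assms w by simp
    also have "\<dots> = w \<sqinter> x" using True by (simp add: le_def)
    finally have wxc: "w \<sqinter> (x \<sqinter> c) = w \<sqinter> x" .
    have "w \<sqinter> x \<sqsubseteq> c"
      using le_trans[OF meet_closed[OF w x] w c meet_le1[OF w x] True] .
    have "w \<sqsubseteq> (x \<leadsto> y) \<sqinter> c \<longleftrightarrow> w \<sqinter> x \<sqsubseteq> y"
      using le_meet_iff[OF imp_closed[OF x y] c w] True residuation[OF x y w] by simp
    also have "\<dots> \<longleftrightarrow> w \<sqinter> (x \<sqinter> c) \<sqsubseteq> y \<sqinter> c"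
      using le_meet_iff[OF y c meet_closed[OF w x]] \<open>w \<sqinter> x \<sqsubseteq> c\<close> wxc by simp
    also have "\<dots> \<longleftrightarrow> w \<sqsubseteq> (x \<sqinter> c \<leadsto> y \<sqinter> c) \<sqinter> c"
      using residuation[OF meet_closed[OF x c] meet_closed[OF y c] w] True
        le_meet_iff[OF imp_closed[OF meet_closed[OF x c] meet_closed[OF y c]] c w] by simp
    finally show ?thesis .
  next
    case False
    then show ?thesis
      using le_meet_iff[OF imp_closed[OF x y] c w]
        le_meet_iff[OF imp_closed[OF meet_closed[OF x c] meet_closed[OF y c]] c w] by simp
  qed
qed

end

lemma (in semilattice_top_on) implicative_semilattice_onI:
  assumes imp_closed: "\<And>x y. x \<in> A \<Longrightarrow> y \<in> A \<Longrightarrow> imp x y \<in> A"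
    and meet_imp: "\<And>x y. x \<in> A \<Longrightarrow> y \<in> A \<Longrightarrow> x \<sqinter> imp x y = x \<sqinter> y"
    and meet_imp_absorb: "\<And>x y. x \<in> A \<Longrightarrow> y \<in> A \<Longrightarrow> y \<sqinter> imp x y = y"
    and imp_meet_distrib: "\<And>x y w. x \<in> A \<Longrightarrow> y \<in> A \<Longrightarrow> w \<in> A \<Longrightarrow>
      imp x (y \<sqinter> w) = imp x y \<sqinter> imp x w"
    and imp_self: "\<And>x. x \<in> A \<Longrightarrow> imp x x = \<top>"
  shows "implicative_semilattice_on A (\<sqinter>) \<top> imp"
proof
  fix x y w assume xyw: "x \<in> A" "y \<in> A" "w \<in> A"
  have imp_mono: "imp x p \<sqsubseteq> imp x q" if "p \<in> A" "q \<in> A" "p \<sqsubseteq> q" for p q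
    using imp_meet_distrib[of x p q] xyw that by (simp add: le_def)
  show "w \<sqinter> x \<sqsubseteq> y \<longleftrightarrow> w \<sqsubseteq> imp x y"
  proof
    assume "w \<sqinter> x \<sqsubseteq> y"
    have "imp x (w \<sqinter> x) = imp x w"
      using xyw by (simp add: imp_meet_distrib imp_self meet_top imp_closed)
    then have "w \<sqsubseteq> imp x (w \<sqinter> x)"
      using meet_imp_absorb[of x w] xyw by (simp add: le_def)
    moreover have "imp x (w \<sqinter> x) \<sqsubseteq> imp x y"
      using imp_mono \<open>w \<sqinter> x \<sqsubseteq> y\<close> xyw meet_closed by blast
    ultimately show "w \<sqsubseteq> imp x y"
      using le_trans[OF xyw(3) imp_closed[OF xyw(1) meet_closed[OF xyw(3,1)]] imp_closed[OF xyw(1,2)]]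
      by blast
  next
    assume "w \<sqsubseteq> imp x y"
    then have "w \<sqinter> x = w \<sqinter> imp x y \<sqinter> x" by (simp add: le_def)
    also have "\<dots> = w \<sqinter> (x \<sqinter> imp x y)"
      using xyw meet_assoc[of w "imp x y" x] meet_comm[of x "imp x y"] imp_closed by simp
    also have "\<dots> = w \<sqinter> (x \<sqinter> y)"
      using xyw meet_imp by simp
    finally show "w \<sqinter> x \<sqsubseteq> y"
      using le_trans[OF _ meet_closed[OF xyw(1,2)] xyw(2) meet_le2[of w "x \<sqinter> y"] meet_le2[of x y]]
        xyw meet_closed by simp
  qed
qed (fact imp_closed)

locale implicative_lattice_on = implicative_semilattice_on +
  fixes join :: "'a \<Rightarrow> 'a \<Rightarrow> 'a" (infixl \<open>\<squnion>\<close> 65)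
  assumes join_closed: "x \<in> A \<Longrightarrow> y \<in> A \<Longrightarrow> x \<squnion> y \<in> A"
    and join_assoc: "x \<in> A \<Longrightarrow> y \<in> A \<Longrightarrow> w \<in> A \<Longrightarrow> x \<squnion> (y \<squnion> w) = x \<squnion> y \<squnion> w"
    and join_comm: "x \<in> A \<Longrightarrow> y \<in> A \<Longrightarrow> x \<squnion> y = y \<squnion> x"
    and meet_join_absorb: "x \<in> A \<Longrightarrow> y \<in> A \<Longrightarrow> x \<sqinter> (x \<squnion> y) = x"
    and join_meet_absorb: "x \<in> A \<Longrightarrow> y \<in> A \<Longrightarrow> x \<squnion> x \<sqinter> y = x"
begin

lemma join_upper1: "x \<in> A \<Longrightarrow> y \<in> A \<Longrightarrow> x \<sqsubseteq> x \<squnion> y"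
  by (simp add: le_def meet_join_absorb)

lemma join_upper2: "x \<in> A \<Longrightarrow> y \<in> A \<Longrightarrow> y \<sqsubseteq> x \<squnion> y"
  by (metis join_comm join_upper1)

lemma join_least:
  assumes "x \<in> A" "y \<in> A" "w \<in> A" "x \<sqsubseteq> w" "y \<sqsubseteq> w"
  shows "x \<squnion> y \<sqsubseteq> w"
proof -
  have join_le: "p \<squnion> w = w" if "p \<in> A" "p \<sqsubseteq> w" for p
    using join_meet_absorb[OF assms(3) that(1)] meet_comm[OF assms(3) that(1)] that
      join_comm[OF that(1) assms(3)] by (simp add: le_def)
  have "x \<squnion> y \<squnion> w = w"
    using assms join_le by (simp add: join_assoc[symmetric])
  then have "(x \<squnion> y) \<sqinter> w = (x \<squnion> y) \<sqinter> (x \<squnion> y \<squnion> w)" by simp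
  then show ?thesis
    using assms by (simp add: le_def meet_join_absorb join_closed)
qed

lemma meet_join_distrib:
  assumes x: "x \<in> A" and y: "y \<in> A" and c: "c \<in> A"
  shows "(x \<squnion> y) \<sqinter> c = x \<sqinter> c \<squnion> y \<sqinter> c"
proof (rule le_antisym)
  let ?r = "x \<sqinter> c \<squnion> y \<sqinter> c"
  have r: "?r \<in> A" using assms by (simp add: join_closed meet_closed)
  have "x \<sqsubseteq> c \<leadsto> ?r" "y \<sqsubseteq> c \<leadsto> ?r"
    using residuation[OF c r x] residuation[OF c r y]
      join_upper1[OF meet_closed[OF x c] meet_closed[OF y c]]
      join_upper2[OF meet_closed[OF x c] meet_closed[OF y c]] by simp_all
  then have "x \<squnion> y \<sqsubseteq> c \<leadsto> ?r"
    using join_least[OF x y imp_closed[OF c r]] by simp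
  then show "(x \<squnion> y) \<sqinter> c \<sqsubseteq> ?r"
    using residuation[OF c r join_closed[OF x y]] by simp
  have below: "p \<sqinter> c \<sqsubseteq> (x \<squnion> y) \<sqinter> c" if "p \<in> A" "p \<sqsubseteq> x \<squnion> y" for p
  proof (rule le_meetI)
    show "p \<sqinter> c \<sqsubseteq> x \<squnion> y"
      using le_trans[OF _ that(1) _ meet_le1[OF that(1) c] that(2)] that(1) assms
      by (simp add: meet_closed join_closed)
    show "p \<sqinter> c \<sqsubseteq> c" using meet_le2[OF that(1) c] .
  qed (use that assms in \<open>simp_all add: meet_closed join_closed\<close>)
  show "?r \<sqsubseteq> (x \<squnion> y) \<sqinter> c"
    using join_least[OF _ _ _ below[OF x join_upper1[OF x y]] below[OF y join_upper2[OF x y]]] assms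
    by (simp add: meet_closed join_closed)
qed (use assms in \<open>simp_all add: join_closed meet_closed\<close>)

end

section \<open>Two congruences that agree on a subuniverse\<close>

definition compatible :: "('a \<times> 'a) set \<Rightarrow> ('a \<Rightarrow> 'a \<Rightarrow> 'a) \<Rightarrow> bool" where
  "compatible \<psi> F \<longleftrightarrow> (\<forall>x y z w. (x, y) \<in> \<psi> \<longrightarrow> (z, w) \<in> \<psi> \<longrightarrow> (F x z, F y w) \<in> \<psi>)"

lemma compatibleI:
  "(\<And>x y z w. (x, y) \<in> \<psi> \<Longrightarrow> (z, w) \<in> \<psi> \<Longrightarrow> (F x z, F y w) \<in> \<psi>) \<Longrightarrow> compatible \<psi> F"
  unfolding compatible_def by blast

lemma compatibleD: "compatible \<psi> F \<Longrightarrow> (x, y) \<in> \<psi> \<Longrightarrow> (z, w) \<in> \<psi> \<Longrightarrow> (F x z, F y w) \<in> \<psi>"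
  unfolding compatible_def by blast

context implicative_semilattice_on
begin

definition cong :: "('a \<times> 'a) set \<Rightarrow> bool" where
  "cong \<psi> \<longleftrightarrow> equiv A \<psi> \<and> compatible \<psi> (\<sqinter>) \<and> compatible \<psi> (\<leadsto>)"

definition subuniverse :: "'a set \<Rightarrow> bool" where
  "subuniverse S \<longleftrightarrow> S \<subseteq> A \<and> \<top> \<in> S \<and> (\<forall>x\<in>S. \<forall>y\<in>S. x \<sqinter> y \<in> S \<and> x \<leadsto> y \<in> S)"

text \<open>\<open>collapse \<psi> c\<close> is the congruence generated by \<open>\<psi>\<close> and the pair \<open>(c, \<top>)\<close>;
  \<open>collapse_over \<psi> S b\<close> is the directed union of the \<open>collapse \<psi> a\<close> with \<open>a \<in> S\<close> above \<open>b\<close>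
  modulo \<open>\<psi>\<close>. The two agree on \<open>S\<close>, but only the first identifies \<open>b\<close> with \<open>\<top>\<close>.\<close>

definition collapse :: "('a \<times> 'a) set \<Rightarrow> 'a \<Rightarrow> ('a \<times> 'a) set" where
  "collapse \<psi> c = {(x, y). x \<in> A \<and> y \<in> A \<and> (x \<sqinter> c, y \<sqinter> c) \<in> \<psi>}"

definition collapse_over :: "('a \<times> 'a) set \<Rightarrow> 'a set \<Rightarrow> 'a \<Rightarrow> ('a \<times> 'a) set" where
  "collapse_over \<psi> S b = (\<Union>a \<in> {a \<in> S. (a \<sqinter> b, b) \<in> \<psi>}. collapse \<psi> a)"

context
  fixes \<psi> assumes \<psi>: "cong \<psi>"
begin

lemma cong_equiv: "equiv A \<psi>"
  using \<psi> by (simp add: cong_def)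

lemma cong_refl: "x \<in> A \<Longrightarrow> (x, x) \<in> \<psi>"
  using cong_equiv by (meson equiv_def refl_onD)

lemma cong_sym: "(x, y) \<in> \<psi> \<Longrightarrow> (y, x) \<in> \<psi>"
  using cong_equiv by (meson equiv_def symD)

lemma cong_trans: "(x, y) \<in> \<psi> \<Longrightarrow> (y, w) \<in> \<psi> \<Longrightarrow> (x, w) \<in> \<psi>"
  using cong_equiv by (meson equiv_def transD)

lemma cong_meet: "(x, y) \<in> \<psi> \<Longrightarrow> (z, w) \<in> \<psi> \<Longrightarrow> (x \<sqinter> z, y \<sqinter> w) \<in> \<psi>"
  using \<psi> by (simp add: cong_def compatibleD)

lemma cong_imp: "(x, y) \<in> \<psi> \<Longrightarrow> (z, w) \<in> \<psi> \<Longrightarrow> (x \<leadsto> z, y \<leadsto> w) \<in> \<psi>"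
  using \<psi> by (simp add: cong_def compatibleD)

lemma cong_meet_right: "(x, y) \<in> \<psi> \<Longrightarrow> c \<in> A \<Longrightarrow> (x \<sqinter> c, y \<sqinter> c) \<in> \<psi>"
  using cong_meet cong_refl by blast

lemma cong_collapse:
  assumes c: "c \<in> A"
  shows "cong (collapse \<psi> c)"
  unfolding cong_def
proof (intro conjI equivI compatibleI)
  show "collapse \<psi> c \<subseteq> A \<times> A"
    by (auto simp: collapse_def)
  show "refl_on A (collapse \<psi> c)"
    by (auto simp: refl_on_def collapse_def intro: cong_refl meet_closed c)
  show "sym (collapse \<psi> c)"
    by (auto simp: sym_def collapse_def intro: cong_sym)
  show "trans (collapse \<psi> c)"
    unfolding trans_def collapse_def using cong_trans by blast
next
  fix x y z w assume "(x, y) \<in> collapse \<psi> c" "(z, w) \<in> collapse \<psi> c"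
  then have xyzw: "x \<in> A" "y \<in> A" "z \<in> A" "w \<in> A"
    and xy: "(x \<sqinter> c, y \<sqinter> c) \<in> \<psi>" and zw: "(z \<sqinter> c, w \<sqinter> c) \<in> \<psi>"
    by (auto simp: collapse_def)
  have "(x \<sqinter> c \<sqinter> (z \<sqinter> c), y \<sqinter> c \<sqinter> (w \<sqinter> c)) \<in> \<psi>"
    using cong_meet[OF xy zw] .
  then show "(x \<sqinter> z, y \<sqinter> w) \<in> collapse \<psi> c"
    using xyzw c by (simp add: collapse_def meet_right_distrib[OF xyzw(1,3) c]
        meet_right_distrib[OF xyzw(2,4) c] meet_closed)
  txt \<open>Relative to \<open>c\<close>, implication is computed from the relativised arguments.\<close>
  have "((x \<sqinter> c \<leadsto> z \<sqinter> c) \<sqinter> c, (y \<sqinter> c \<leadsto> w \<sqinter> c) \<sqinter> c) \<in> \<psi>"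
    using cong_meet_right[OF cong_imp[OF xy zw] c] .
  then show "(x \<leadsto> z, y \<leadsto> w) \<in> collapse \<psi> c"
    using xyzw c by (simp add: collapse_def imp_meet_restrict imp_closed)
qed

lemma subset_collapse: "c \<in> A \<Longrightarrow> \<psi> \<subseteq> collapse \<psi> c"
  using equiv_type[OF cong_equiv] cong_meet_right unfolding collapse_def by blast

lemma collapse_self_top: "b \<in> A \<Longrightarrow> (b, \<top>) \<in> collapse \<psi> b"
  by (simp add: collapse_def cong_refl top_closed top_meet meet_idem)

lemma collapse_subset_collapse_meet:
  assumes "a \<in> A" "a' \<in> A"
  shows "collapse \<psi> a \<subseteq> collapse \<psi> (a \<sqinter> a')"
proof
  fix p assume "p \<in> collapse \<psi> a"
  then obtain x y where p: "p = (x, y)" "x \<in> A" "y \<in> A" "(x \<sqinter> a, y \<sqinter> a) \<in> \<psi>"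
    by (auto simp: collapse_def)
  then have "(x \<sqinter> a \<sqinter> a', y \<sqinter> a \<sqinter> a') \<in> \<psi>"
    using cong_meet_right assms by blast
  then show "p \<in> collapse \<psi> (a \<sqinter> a')"
    using p assms by (simp add: collapse_def meet_assoc)
qed

lemma above_meet:
  assumes "a \<in> A" "a' \<in> A" "b \<in> A" "(a \<sqinter> b, b) \<in> \<psi>" "(a' \<sqinter> b, b) \<in> \<psi>"
  shows "(a \<sqinter> a' \<sqinter> b, b) \<in> \<psi>"
proof -
  have "(a \<sqinter> (a' \<sqinter> b), a \<sqinter> b) \<in> \<psi>"
    using cong_meet[OF cong_refl[OF assms(1)] assms(5)] .
  then show ?thesis
    using cong_trans[OF _ assms(4)] assms(1-3) by (simp add: meet_assoc)
qed

lemma imp_above_of_collapse: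
  assumes "(p, q) \<in> collapse \<psi> b" "b \<in> A"
  shows "((p \<leadsto> q) \<sqinter> b, b) \<in> \<psi>"
proof -
  have pq: "p \<in> A" "q \<in> A" "(p \<sqinter> b, q \<sqinter> b) \<in> \<psi>"
    using assms(1) by (auto simp: collapse_def)
  have "((p \<sqinter> b \<leadsto> q \<sqinter> b) \<sqinter> b, (q \<sqinter> b \<leadsto> q \<sqinter> b) \<sqinter> b) \<in> \<psi>"
    using cong_meet_right[OF cong_imp[OF pq(3) cong_refl] assms(2)] pq assms(2)
    by (simp add: meet_closed)
  then show ?thesis
    using pq assms(2)
    by (simp add: imp_meet_restrict[OF pq(1,2) assms(2), symmetric] imp_self top_meet meet_closed)
qed

end

lemma collapse_over_iff:
  "(x, y) \<in> collapse_over \<psi> S b \<longleftrightarrow> (\<exists>a\<in>S. (a \<sqinter> b, b) \<in> \<psi> \<and> (x, y) \<in> collapse \<psi> a)"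
  by (auto simp: collapse_over_def)

lemma subuniverse_subset: "subuniverse S \<Longrightarrow> S \<subseteq> A"
  by (simp add: subuniverse_def)

context
  fixes \<psi> S b assumes \<psi>: "cong \<psi>" and S: "subuniverse S" and b: "b \<in> A"
begin

lemma top_meet_cong: "(\<top> \<sqinter> b, b) \<in> \<psi>"
  using \<psi> b by (simp add: top_meet cong_refl)

lemma collapse_over_common:
  assumes "(x, y) \<in> collapse_over \<psi> S b" "(z, w) \<in> collapse_over \<psi> S b"
  obtains a where "a \<in> S" "(a \<sqinter> b, b) \<in> \<psi>" "(x, y) \<in> collapse \<psi> a" "(z, w) \<in> collapse \<psi> a"
proof -
  obtain a1 a2 where a: "a1 \<in> S" "(a1 \<sqinter> b, b) \<in> \<psi>" "(x, y) \<in> collapse \<psi> a1"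
    "a2 \<in> S" "(a2 \<sqinter> b, b) \<in> \<psi>" "(z, w) \<in> collapse \<psi> a2"
    using assms by (auto simp: collapse_over_iff)
  have A: "a1 \<in> A" "a2 \<in> A" using a S subuniverse_subset by auto
  show thesis
  proof (rule that)
    show "a1 \<sqinter> a2 \<in> S" using a S by (simp add: subuniverse_def)
    show "(a1 \<sqinter> a2 \<sqinter> b, b) \<in> \<psi>" using above_meet[OF \<psi> A b] a by blast
    show "(x, y) \<in> collapse \<psi> (a1 \<sqinter> a2)"
      using collapse_subset_collapse_meet[OF \<psi> A] a by blast
    show "(z, w) \<in> collapse \<psi> (a1 \<sqinter> a2)"
      using collapse_subset_collapse_meet[OF \<psi> A(2,1)] a meet_comm[OF A] by auto
  qed
qed

lemma cong_collapse_over: "cong (collapse_over \<psi> S b)"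
  unfolding cong_def
proof (intro conjI equivI compatibleI)
  show "collapse_over \<psi> S b \<subseteq> A \<times> A"
    by (auto simp: collapse_over_def collapse_def)
  show "refl_on A (collapse_over \<psi> S b)"
    using cong_refl[OF cong_collapse[OF \<psi> top_closed]] top_meet_cong S
    by (auto simp: refl_on_def collapse_over_iff subuniverse_def)
  show "sym (collapse_over \<psi> S b)"
    unfolding sym_def collapse_over_iff
    using S subuniverse_subset cong_sym[OF cong_collapse[OF \<psi>]] by blast
  show "trans (collapse_over \<psi> S b)"
  proof (rule transI)
    fix x y z assume "(x, y) \<in> collapse_over \<psi> S b" "(y, z) \<in> collapse_over \<psi> S b"
    then obtain a where a: "a \<in> S" "(a \<sqinter> b, b) \<in> \<psi>" "(x, y) \<in> collapse \<psi> a" "(y, z) \<in> collapse \<psi> a"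
      by (rule collapse_over_common)
    then have "(x, z) \<in> collapse \<psi> a"
      using S subuniverse_subset cong_trans[OF cong_collapse[OF \<psi>]] by blast
    then show "(x, z) \<in> collapse_over \<psi> S b"
      using a by (auto simp: collapse_over_iff)
  qed
next
  fix x y z w assume "(x, y) \<in> collapse_over \<psi> S b" "(z, w) \<in> collapse_over \<psi> S b"
  then obtain a where a: "a \<in> S" "(a \<sqinter> b, b) \<in> \<psi>" "(x, y) \<in> collapse \<psi> a" "(z, w) \<in> collapse \<psi> a"
    by (rule collapse_over_common)
  then have "a \<in> A" using S subuniverse_subset by blast
  then show "(x \<sqinter> z, y \<sqinter> w) \<in> collapse_over \<psi> S b" "(x \<leadsto> z, y \<leadsto> w) \<in> collapse_over \<psi> S b"
    using a cong_meet[OF cong_collapse[OF \<psi>]] cong_imp[OF cong_collapse[OF \<psi>]]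
    by (auto simp: collapse_over_iff)
qed

lemma subset_collapse_over: "\<psi> \<subseteq> collapse_over \<psi> S b"
proof (rule subrelI)
  fix x y assume "(x, y) \<in> \<psi>"
  then have "(x, y) \<in> collapse \<psi> \<top>" using subset_collapse[OF \<psi> top_closed] by blast
  then show "(x, y) \<in> collapse_over \<psi> S b"
    using top_meet_cong S unfolding collapse_over_iff subuniverse_def by blast
qed

lemma collapse_over_subset_collapse: "collapse_over \<psi> S b \<subseteq> collapse \<psi> b"
proof (rule subrelI)
  fix x y assume "(x, y) \<in> collapse_over \<psi> S b"
  then obtain a where p: "a \<in> S" "(a \<sqinter> b, b) \<in> \<psi>" "(x, y) \<in> collapse \<psi> a"
    unfolding collapse_over_iff by blast
  then have xy: "x \<in> A" "y \<in> A" "(x \<sqinter> a, y \<sqinter> a) \<in> \<psi>"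
    by (auto simp: collapse_def)
  have a: "a \<in> A" using p S subuniverse_subset by blast
  have 1: "(x \<sqinter> b, x \<sqinter> a \<sqinter> b) \<in> \<psi>"
    using cong_sym[OF \<psi> cong_meet[OF \<psi> cong_refl[OF \<psi> xy(1)] p(2)]] xy a b by (simp add: meet_assoc)
  have 2: "(x \<sqinter> a \<sqinter> b, y \<sqinter> a \<sqinter> b) \<in> \<psi>"
    using cong_meet_right[OF \<psi> xy(3) b] .
  have 3: "(y \<sqinter> a \<sqinter> b, y \<sqinter> b) \<in> \<psi>"
    using cong_meet[OF \<psi> cong_refl[OF \<psi> xy(2)] p(2)] xy a b by (simp add: meet_assoc)
  show "(x, y) \<in> collapse \<psi> b"
    using cong_trans[OF \<psi> cong_trans[OF \<psi> 1 2] 3] xy by (simp add: collapse_def)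
qed

text \<open>On \<open>S\<close> the converse holds: the witness \<open>(x \<leadsto> y) \<sqinter> (y \<leadsto> x)\<close> lies in \<open>S\<close> and above \<open>b\<close>.\<close>

lemma collapse_in_collapse_over:
  assumes xS: "x \<in> S" and yS: "y \<in> S" and xy: "(x, y) \<in> collapse \<psi> b"
  shows "(x, y) \<in> collapse_over \<psi> S b"
proof -
  have x: "x \<in> A" and y: "y \<in> A" using xS yS S subuniverse_subset by auto
  let ?a = "(x \<leadsto> y) \<sqinter> (y \<leadsto> x)"
  have "?a \<in> S" using xS yS S by (simp add: subuniverse_def)
  moreover have "(?a \<sqinter> b, b) \<in> \<psi>"
  proof -
    have yx: "(y, x) \<in> collapse \<psi> b" using cong_sym[OF cong_collapse[OF \<psi> b] xy] .
    show ?thesis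
      using above_meet[OF \<psi> imp_closed[OF x y] imp_closed[OF y x] b]
        imp_above_of_collapse[OF \<psi> xy b] imp_above_of_collapse[OF \<psi> yx b] by blast
  qed
  moreover have "x \<sqinter> ?a = y \<sqinter> ?a"
    using meet_biimp[OF x y] meet_biimp[OF y x] x y
    by (simp add: meet_comm[of "x \<leadsto> y"] meet_comm[OF x y] imp_closed)
  then have "(x, y) \<in> collapse \<psi> ?a"
    using x y cong_refl[OF \<psi>] by (simp add: collapse_def meet_closed imp_closed)
  ultimately show ?thesis by (auto simp: collapse_over_iff)
qed

lemma restr_collapse_over: "restr (collapse \<psi> b) S = restr (collapse_over \<psi> S b) S"
  using collapse_in_collapse_over collapse_over_subset_collapse by (auto simp: restr_def)

lemma top_collapse_over: "(b, \<top>) \<in> collapse_over \<psi> S b \<Longrightarrow> \<exists>s\<in>S. (b, s) \<in> \<psi>"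
proof -
  assume "(b, \<top>) \<in> collapse_over \<psi> S b"
  then obtain a where a: "a \<in> S" "(a \<sqinter> b, b) \<in> \<psi>" "(b \<sqinter> a, \<top> \<sqinter> a) \<in> \<psi>"
    by (auto simp: collapse_over_iff collapse_def)
  have "a \<in> A" using a S subuniverse_subset by blast
  then have "(b, b \<sqinter> a) \<in> \<psi>"
    using cong_sym[OF \<psi> a(2)] b by (simp add: meet_comm)
  then have "(b, a) \<in> \<psi>"
    using cong_trans[OF \<psi> _ a(3)] \<open>a \<in> A\<close> by (simp add: top_meet)
  then show ?thesis using a by blast
qed

lemma collapse_ne_collapse_over: "\<forall>s\<in>S. (b, s) \<notin> \<psi> \<Longrightarrow> collapse \<psi> b \<noteq> collapse_over \<psi> S b"
  using collapse_self_top[OF \<psi> b] top_collapse_over by blast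

end

end

context implicative_lattice_on
begin

lemma compatible_join_collapse:
  assumes "cong \<psi>" "compatible \<psi> (\<squnion>)" "c \<in> A"
  shows "compatible (collapse \<psi> c) (\<squnion>)"
proof (rule compatibleI)
  fix x y z w assume "(x, y) \<in> collapse \<psi> c" "(z, w) \<in> collapse \<psi> c"
  then have xyzw: "x \<in> A" "y \<in> A" "z \<in> A" "w \<in> A"
    and "(x \<sqinter> c \<squnion> z \<sqinter> c, y \<sqinter> c \<squnion> w \<sqinter> c) \<in> \<psi>"
    using compatibleD[OF assms(2)] by (auto simp: collapse_def)
  then show "(x \<squnion> z, y \<squnion> w) \<in> collapse \<psi> c"
    using meet_join_distrib[OF xyzw(1,3) assms(3)] meet_join_distrib[OF xyzw(2,4) assms(3)]
    unfolding collapse_def by (simp add: join_closed)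
qed

lemma compatible_join_collapse_over:
  assumes "cong \<psi>" "compatible \<psi> (\<squnion>)" "subuniverse S" "b \<in> A"
  shows "compatible (collapse_over \<psi> S b) (\<squnion>)"
proof (rule compatibleI)
  fix x y z w assume "(x, y) \<in> collapse_over \<psi> S b" "(z, w) \<in> collapse_over \<psi> S b"
  then obtain a where a: "a \<in> S" "(a \<sqinter> b, b) \<in> \<psi>" "(x, y) \<in> collapse \<psi> a" "(z, w) \<in> collapse \<psi> a"
    by (rule collapse_over_common[OF assms(1,3,4)])
  have "a \<in> A" using a(1) assms(3) subuniverse_subset by blast
  then have "(x \<squnion> z, y \<squnion> w) \<in> collapse \<psi> a"
    using compatibleD[OF compatible_join_collapse[OF assms(1,2)] a(3,4)] by blast
  then show "(x \<squnion> z, y \<squnion> w) \<in> collapse_over \<psi> S b"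
    using a by (auto simp: collapse_over_iff)
qed

end

section \<open>Congruences of general algebras and saturation\<close>

lemma algebra_closed: "algebra ar B \<Longrightarrow> length xs = ar f \<Longrightarrow> set xs \<subseteq> carrier B \<Longrightarrow> ops B f xs \<in> carrier B"
  unfolding algebra_def by blast

lemma subalg_subset: "subalg ar S B \<Longrightarrow> S \<subseteq> carrier B"
  unfolding subalg_def by blast

lemma subalg_closed: "subalg ar S B \<Longrightarrow> length xs = ar f \<Longrightarrow> set xs \<subseteq> S \<Longrightarrow> ops B f xs \<in> S"
  unfolding subalg_def by blast

lemma congruence_equiv: "congruence ar B \<theta> \<Longrightarrow> equiv (carrier B) \<theta>"
  unfolding congruence_def by blast

lemma congruenceD:
  "congruence ar B \<theta> \<Longrightarrow> length xs = ar f \<Longrightarrow> length ys = ar f \<Longrightarrow>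
    list_all2 (\<lambda>x y. (x, y) \<in> \<theta>) xs ys \<Longrightarrow> (ops B f xs, ops B f ys) \<in> \<theta>"
  unfolding congruence_def by blast

lemma congruence_iff_compatible:
  assumes alg: "algebra ar B" and ar: "\<And>f. ar f = 0 \<or> ar f = 2"
  shows "congruence ar B \<theta> \<longleftrightarrow>
    equiv (carrier B) \<theta> \<and> (\<forall>f. ar f = 2 \<longrightarrow> compatible \<theta> (\<lambda>x y. ops B f [x, y]))"
proof
  assume \<theta>: "congruence ar B \<theta>"
  have "compatible \<theta> (\<lambda>x y. ops B f [x, y])" if "ar f = 2" for f
    by (rule compatibleI) (use congruenceD[OF \<theta>, of "[_, _]" f "[_, _]"] that in simp)
  then show "equiv (carrier B) \<theta> \<and> (\<forall>f. ar f = 2 \<longrightarrow> compatible \<theta> (\<lambda>x y. ops B f [x, y]))"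
    using congruence_equiv[OF \<theta>] by blast
next
  assume \<theta>: "equiv (carrier B) \<theta> \<and> (\<forall>f. ar f = 2 \<longrightarrow> compatible \<theta> (\<lambda>x y. ops B f [x, y]))"
  show "congruence ar B \<theta>"
    unfolding congruence_def
  proof (intro conjI allI impI)
    fix f xs ys assume l: "length xs = ar f" "length ys = ar f" "list_all2 (\<lambda>x y. (x, y) \<in> \<theta>) xs ys"
    from ar[of f] show "(ops B f xs, ops B f ys) \<in> \<theta>"
    proof (elim disjE)
      assume "ar f = 0"
      then have "xs = []" "ys = []" using l by auto
      then show ?thesis
        using algebra_closed[OF alg, of "[]" f] \<open>ar f = 0\<close> \<theta> by (auto simp: equiv_def refl_on_def)
    next
      assume "ar f = 2"
      then obtain x z y w where "xs = [x, z]" "ys = [y, w]"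
        using l by (auto simp: numeral_2_eq_2 length_Suc_conv)
      then show ?thesis using l \<theta> \<open>ar f = 2\<close> by (auto simp: compatible_def)
    qed
  qed (use \<theta> in blast)
qed

lemma congruence_Id_on:
  assumes alg: "algebra ar B"
  shows "congruence ar B (Id_on (carrier B))"
  unfolding congruence_def
proof (intro conjI allI impI)
  show "equiv (carrier B) (Id_on (carrier B))"
    by (auto simp: equiv_def refl_on_def sym_def trans_def)
  fix f xs ys assume l: "length xs = ar f" "list_all2 (\<lambda>x y. (x, y) \<in> Id_on (carrier B)) xs ys"
  from l(2) have "xs = ys \<and> set xs \<subseteq> carrier B"
    by (induction rule: list_all2_induct) auto
  then show "(ops B f xs, ops B f ys) \<in> Id_on (carrier B)"
    using algebra_closed[OF alg l(1)] by auto
qed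

definition saturation :: "('a \<times> 'a) set \<Rightarrow> 'a set \<Rightarrow> 'a set" where
  "saturation \<theta> S = {x. \<exists>s\<in>S. (x, s) \<in> \<theta>}"

lemma saturation_subset: "equiv C \<theta> \<Longrightarrow> saturation \<theta> S \<subseteq> C"
  unfolding saturation_def using equiv_type by blast

lemma saturation_Id_on: "S \<subseteq> C \<Longrightarrow> saturation (Id_on C) S = S"
  unfolding saturation_def by auto

lemma saturation_mono: "\<theta> \<subseteq> \<theta>' \<Longrightarrow> saturation \<theta> S \<subseteq> saturation \<theta>' S"
  unfolding saturation_def by blast

lemma subalg_saturation:
  assumes \<theta>: "congruence ar B \<theta>" and S: "subalg ar S B"
  shows "subalg ar (saturation \<theta> S) B"
  unfolding subalg_def
proof (intro conjI allI impI)
  show "saturation \<theta> S \<subseteq> carrier B"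
    using saturation_subset congruence_equiv[OF \<theta>] by blast
  fix f xs assume l: "length xs = ar f" "set xs \<subseteq> saturation \<theta> S"
  then have "\<forall>x\<in>set xs. \<exists>s. s \<in> S \<and> (x, s) \<in> \<theta>"
    unfolding saturation_def by blast
  then obtain g where g: "\<forall>x\<in>set xs. g x \<in> S \<and> (x, g x) \<in> \<theta>"
    by (rule bchoice[THEN exE])
  have "(ops B f xs, ops B f (map g xs)) \<in> \<theta>"
    using congruenceD[OF \<theta>] l g by (simp add: list_all2_map2 list_all2_same)
  moreover have "ops B f (map g xs) \<in> S"
    using subalg_closed[OF S, of "map g xs" f] l g by auto
  ultimately show "ops B f xs \<in> saturation \<theta> S"
    unfolding saturation_def by blast
qed

lemma congruence_Union_chain:
  assumes ch: "chain\<^sub>\<subseteq> Cs" and ne: "Cs \<noteq> {}" and cs: "\<And>\<theta>. \<theta> \<in> Cs \<Longrightarrow> congruence ar B \<theta>"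
  shows "congruence ar B (\<Union>Cs)"
  unfolding congruence_def
proof (intro conjI equivI allI impI)
  have eq: "equiv (carrier B) \<theta>" if "\<theta> \<in> Cs" for \<theta> using cs[OF that] congruence_equiv by blast
  then show "\<Union>Cs \<subseteq> carrier B \<times> carrier B"
    using equiv_type by blast
  show "sym (\<Union>Cs)"
    using eq unfolding equiv_def sym_def by blast
  show "refl_on (carrier B) (\<Union>Cs)"
    using ne eq unfolding equiv_def refl_on_def by blast
  show "trans (\<Union>Cs)"
    using chain_subset_trans_Union[OF ch] eq by (simp add: equiv_def)
  fix f xs ys assume l: "length xs = ar f" "length ys = ar f" "list_all2 (\<lambda>x y. (x, y) \<in> \<Union>Cs) xs ys"
  have "\<exists>\<theta>\<in>Cs. list_all2 (\<lambda>x y. (x, y) \<in> \<theta>) xs ys"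
    using l(3)
  proof (induction rule: list_all2_induct)
    case Nil
    then show ?case using ne by auto
  next
    case (Cons x xs y ys)
    then obtain \<theta>1 \<theta>2 where \<theta>: "\<theta>1 \<in> Cs" "(x, y) \<in> \<theta>1" "\<theta>2 \<in> Cs"
      and xys: "list_all2 (\<lambda>x y. (x, y) \<in> \<theta>2) xs ys"
      by blast
    from ch \<theta> consider "\<theta>1 \<subseteq> \<theta>2" | "\<theta>2 \<subseteq> \<theta>1"
      unfolding chain_subset_def by blast
    then show ?case
    proof cases
      case 1
      then have "list_all2 (\<lambda>x y. (x, y) \<in> \<theta>2) (x # xs) (y # ys)"
        using \<theta>(2) xys by auto
      then show ?thesis using \<theta>(3) ..
    next
      case 2
      have "list_all2 (\<lambda>x y. (x, y) \<in> \<theta>1) xs ys"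
        by (rule list_all2_mono[OF xys]) (use 2 in blast)
      then have "list_all2 (\<lambda>x y. (x, y) \<in> \<theta>1) (x # xs) (y # ys)"
        using \<theta>(2) by auto
      then show ?thesis using \<theta>(1) ..
    qed
  qed
  then obtain \<theta> where "\<theta> \<in> Cs" "list_all2 (\<lambda>x y. (x, y) \<in> \<theta>) xs ys" ..
  then show "(ops B f xs, ops B f ys) \<in> \<Union>Cs"
    using congruenceD[OF cs[OF \<open>\<theta> \<in> Cs\<close>] l(1,2)] by blast
qed

lemma finite_subset_saturation_Union_chain:
  assumes ch: "chain\<^sub>\<subseteq> Cs" and ne: "Cs \<noteq> {}"
  shows "finite X \<Longrightarrow> X \<subseteq> saturation (\<Union>Cs) S \<Longrightarrow> \<exists>\<theta>\<in>Cs. X \<subseteq> saturation \<theta> S"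
proof (induction rule: finite_induct)
  case empty
  then show ?case using ne by blast
next
  case (insert x F)
  then obtain \<theta>1 \<theta>2 where \<theta>: "\<theta>1 \<in> Cs" "F \<subseteq> saturation \<theta>1 S" "\<theta>2 \<in> Cs" "x \<in> saturation \<theta>2 S"
    by (auto simp: saturation_def)
  from ch \<theta> consider "\<theta>1 \<subseteq> \<theta>2" | "\<theta>2 \<subseteq> \<theta>1"
    unfolding chain_subset_def by blast
  then show ?case
    using saturation_mono[of \<theta>1 \<theta>2 S] saturation_mono[of \<theta>2 \<theta>1 S] \<theta> by cases blast+
qed

text \<open>Finite generation is what makes the union of a chain of congruences with proper
  saturation of \<open>S\<close> again such a congruence.\<close>

lemma maximal_congruence_saturation:
  assumes alg: "algebra ar B" and fg: "fin_gen ar B" and S: "subalg ar S B" and ne: "S \<noteq> carrier B"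
  obtains \<psi> where "congruence ar B \<psi>" "saturation \<psi> S \<noteq> carrier B"
    "\<And>\<theta>. congruence ar B \<theta> \<Longrightarrow> \<psi> \<subseteq> \<theta> \<Longrightarrow> \<theta> \<noteq> \<psi> \<Longrightarrow> saturation \<theta> S = carrier B"
proof -
  define F where "F = {\<psi>. congruence ar B \<psi> \<and> saturation \<psi> S \<noteq> carrier B}"
  have "Id_on (carrier B) \<in> F"
    using congruence_Id_on[OF alg] saturation_Id_on[OF subalg_subset[OF S]] ne by (simp add: F_def)
  moreover obtain X where X: "finite X" "X \<subseteq> carrier B" "Sg ar B X = carrier B"
    using fg unfolding fin_gen_def by blast
  have "\<Union>Cs \<in> F" if Cs: "Cs \<noteq> {}" "subset.chain F Cs" for Cs
  proof -
    have ch: "chain\<^sub>\<subseteq> Cs" and CsF: "Cs \<subseteq> F"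
      using Cs(2) by (simp_all add: chain_subset_alt_def subset.chain_def)
    have cs: "\<And>\<psi>. \<psi> \<in> Cs \<Longrightarrow> congruence ar B \<psi>" using CsF by (auto simp: F_def)
    have "saturation (\<Union>Cs) S \<noteq> carrier B"
    proof
      assume "saturation (\<Union>Cs) S = carrier B"
      then obtain \<psi> where \<psi>: "\<psi> \<in> Cs" "X \<subseteq> saturation \<psi> S"
        using finite_subset_saturation_Union_chain[OF ch Cs(1) X(1)] X(2) by blast
      then have "carrier B \<subseteq> saturation \<psi> S"
        using subalg_saturation[OF cs[OF \<psi>(1)] S] X(3) unfolding Sg_def by blast
      then show False
        using \<psi>(1) CsF saturation_subset[OF congruence_equiv[OF cs[OF \<psi>(1)]]] by (auto simp: F_def)
    qed
    then show ?thesis using congruence_Union_chain[OF ch Cs(1) cs] by (simp add: F_def)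
  qed
  ultimately obtain \<psi> where \<psi>: "\<psi> \<in> F" and max: "\<forall>\<theta>\<in>F. \<psi> \<subseteq> \<theta> \<longrightarrow> \<theta> = \<psi>"
    using subset_Zorn_nonempty[of F] by blast
  show thesis
  proof (rule that)
    show "congruence ar B \<psi>" "saturation \<psi> S \<noteq> carrier B"
      using \<psi> by (simp_all add: F_def)
    fix \<theta> assume "congruence ar B \<theta>" "\<psi> \<subseteq> \<theta>" "\<theta> \<noteq> \<psi>"
    then show "saturation \<theta> S = carrier B"
      using max by (auto simp: F_def)
  qed
qed

section \<open>Image algebras and epimorphisms\<close>

instance trm :: (countable) countable
  by countable_datatype

lemma eval_closed:
  "algebra ar B \<Longrightarrow> \<forall>n. \<rho> n \<in> carrier B \<Longrightarrow> wf_trm ar t \<Longrightarrow> eval B \<rho> t \<in> carrier B"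
proof (induction t)
  case (TFn f ts)
  then show ?case by (auto intro!: algebra_closed)
qed simp

lemma countable_carrier_if_fin_gen:
  fixes B :: "('f::countable, 'b) alg"
  assumes alg: "algebra ar B" and fg: "fin_gen ar B"
  shows "countable (carrier B)"
proof (cases "carrier B = {}")
  case False
  then obtain c where c: "c \<in> carrier B" by blast
  obtain X where X: "finite X" "X \<subseteq> carrier B" "Sg ar B X = carrier B"
    using fg unfolding fin_gen_def by blast
  obtain xs where xs: "set xs = X" using finite_list[OF X(1)] by blast
  define \<rho> where "\<rho> n = (if n < length xs then xs ! n else c)" for n
  have \<rho>: "\<forall>n. \<rho> n \<in> carrier B" using X xs c unfolding \<rho>_def by auto
  define V where "V = eval B \<rho> ` {t. wf_trm ar t}"
  have "subalg ar V B"
    unfolding subalg_def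
  proof (intro conjI allI impI)
    show "V \<subseteq> carrier B" unfolding V_def using eval_closed[OF alg \<rho>] by blast
    fix f ys assume l: "length ys = ar f" "set ys \<subseteq> V"
    then have "\<forall>y\<in>set ys. \<exists>t. wf_trm ar t \<and> eval B \<rho> t = y"
      unfolding V_def by blast
    then obtain g where g: "\<forall>y\<in>set ys. wf_trm ar (g y) \<and> eval B \<rho> (g y) = y"
      by (rule bchoice[THEN exE])
    then have "map (eval B \<rho>) (map g ys) = ys" by (induction ys) auto
    then have "ops B f ys = eval B \<rho> (TFn f (map g ys))" by simp
    moreover have "wf_trm ar (TFn f (map g ys))" using g l by auto
    ultimately show "ops B f ys \<in> V" unfolding V_def by blast
  qed
  moreover have "X \<subseteq> V"
  proof
    fix x assume "x \<in> X"
    then obtain n where "n < length xs" "xs ! n = x" using xs by (metis in_set_conv_nth)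
    then have "x = eval B \<rho> (TVar n)" by (simp add: \<rho>_def)
    then show "x \<in> V" unfolding V_def by (rule image_eqI) simp
  qed
  ultimately have "carrier B \<subseteq> V" using X(3) unfolding Sg_def by blast
  moreover have "countable V" unfolding V_def by simp
  ultimately show ?thesis by (rule countable_subset)
qed simp

lemma quotient_injection:
  fixes C :: "'b set"
  assumes C: "countable C" and \<theta>: "equiv C \<theta>" and inf: "infinite (UNIV :: 'c set)"
  obtains \<kappa> :: "'b \<Rightarrow> 'c" where "\<And>x y. x \<in> C \<Longrightarrow> y \<in> C \<Longrightarrow> \<kappa> x = \<kappa> y \<longleftrightarrow> (x, y) \<in> \<theta>"
proof -
  obtain e :: "nat \<Rightarrow> 'c" where e: "inj e" using infinite_countable_subset[OF inf] by blast
  have "countable (C // \<theta>)" using C by (simp add: quotient_def)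
  then obtain g :: "'b set \<Rightarrow> nat" where g: "inj_on g (C // \<theta>)" unfolding countable_def by blast
  show thesis
  proof (rule that)
    fix x y assume xy: "x \<in> C" "y \<in> C"
    have "e (g (\<theta> `` {x})) = e (g (\<theta> `` {y})) \<longleftrightarrow> \<theta> `` {x} = \<theta> `` {y}"
      using inj_eq[OF e] inj_on_eq_iff[OF g] xy by (simp add: quotientI)
    also have "\<dots> \<longleftrightarrow> (x, y) \<in> \<theta>" using equiv_class_eq_iff[OF \<theta>] xy by blast
    finally show "e (g (\<theta> `` {x})) = e (g (\<theta> `` {y})) \<longleftrightarrow> (x, y) \<in> \<theta>" .
  qed
qed

definition image_alg :: "('f, 'b) alg \<Rightarrow> ('b \<Rightarrow> 'c) \<Rightarrow> ('f, 'c) alg" where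
  "image_alg B \<kappa> =
    \<lparr>carrier = \<kappa> ` carrier B, ops = (\<lambda>f ys. \<kappa> (ops B f (map (inv_into (carrier B) \<kappa>) ys)))\<rparr>"

lemma hom_image_alg_comp:
  assumes alg: "algebra ar B" and \<theta>: "congruence ar B \<theta>"
    and ker: "\<And>x y. x \<in> carrier B \<Longrightarrow> y \<in> carrier B \<Longrightarrow> \<kappa> x = \<kappa> y \<longleftrightarrow> (x, y) \<in> \<theta>"
    and \<sigma>: "\<And>x. x \<in> carrier B \<Longrightarrow> \<sigma> x \<in> carrier B"
    and \<sigma>_ops: "\<And>f xs. length xs = ar f \<Longrightarrow> set xs \<subseteq> carrier B \<Longrightarrow>
      (ops B f (map \<sigma> xs), \<sigma> (ops B f xs)) \<in> \<theta>"
  shows "hom ar (\<kappa> \<circ> \<sigma>) B (image_alg B \<kappa>)"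
  unfolding hom_def
proof (intro conjI allI impI)
  show "(\<kappa> \<circ> \<sigma>) ` carrier B \<subseteq> carrier (image_alg B \<kappa>)"
    using \<sigma> by (auto simp: image_alg_def)
  fix f xs assume l: "length xs = ar f" "set xs \<subseteq> carrier B"
  let ?r = "inv_into (carrier B) \<kappa>"
  let ?ys = "map (\<lambda>x. ?r (\<kappa> (\<sigma> x))) xs"
  have "(?r (\<kappa> (\<sigma> x)), \<sigma> x) \<in> \<theta>" if "x \<in> set xs" for x
    using ker[of "?r (\<kappa> (\<sigma> x))" "\<sigma> x"] \<sigma> l that
    by (auto simp: inv_into_into f_inv_into_f)
  then have "(ops B f ?ys, ops B f (map \<sigma> xs)) \<in> \<theta>"
    using congruenceD[OF \<theta>, of ?ys f "map \<sigma> xs"] l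
    by (simp add: list_all2_map1 list_all2_map2 list_all2_same)
  then have "(ops B f ?ys, \<sigma> (ops B f xs)) \<in> \<theta>"
    using \<sigma>_ops[OF l] congruence_equiv[OF \<theta>] by (meson equiv_def transD)
  then have "\<kappa> (ops B f ?ys) = \<kappa> (\<sigma> (ops B f xs))"
    using ker equiv_type[OF congruence_equiv[OF \<theta>]] by blast
  then show "(\<kappa> \<circ> \<sigma>) (ops B f xs) = ops (image_alg B \<kappa>) f (map (\<kappa> \<circ> \<sigma>) xs)"
    by (simp add: image_alg_def comp_def)
qed

lemma hom_image_alg:
  assumes "algebra ar B" "congruence ar B \<theta>"
    and "\<And>x y. x \<in> carrier B \<Longrightarrow> y \<in> carrier B \<Longrightarrow> \<kappa> x = \<kappa> y \<longleftrightarrow> (x, y) \<in> \<theta>"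
  shows "hom ar \<kappa> B (image_alg B \<kappa>)"
proof -
  have "hom ar (\<kappa> \<circ> id) B (image_alg B \<kappa>)"
  proof (rule hom_image_alg_comp[OF assms])
    show "\<And>x. x \<in> carrier B \<Longrightarrow> id x \<in> carrier B" by simp
    fix f xs assume "length xs = ar f" "set xs \<subseteq> carrier B"
    then show "(ops B f (map id xs), id (ops B f xs)) \<in> \<theta>"
      using congruence_equiv[OF assms(2)] algebra_closed[OF assms(1)]
      unfolding equiv_def refl_on_def by simp
  qed
  then show ?thesis by simp
qed

lemma eval_hom:
  assumes h: "hom ar \<kappa> B C" and alg: "algebra ar B" and \<rho>: "\<forall>n. \<rho> n \<in> carrier B"
  shows "wf_trm ar t \<Longrightarrow> eval C (\<lambda>n. \<kappa> (\<rho> n)) t = \<kappa> (eval B \<rho> t)"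
proof (induction t)
  case (TFn f ts)
  then have IH: "map (eval C (\<lambda>n. \<kappa> (\<rho> n))) ts = map \<kappa> (map (eval B \<rho>) ts)" by auto
  have "length (map (eval B \<rho>) ts) = ar f" "set (map (eval B \<rho>) ts) \<subseteq> carrier B"
    using TFn.prems eval_closed[OF alg \<rho>] by auto
  then have "\<kappa> (ops B f (map (eval B \<rho>) ts)) = ops C f (map \<kappa> (map (eval B \<rho>) ts))"
    using h unfolding hom_def by blast
  then show ?case unfolding eval.simps IH by simp
qed simp

lemma satisfies_hom_image:
  assumes alg: "algebra ar B" and h: "hom ar \<kappa> B C" and onto: "\<kappa> ` carrier B = carrier C"
    and wf: "wf_trm ar (fst e)" "wf_trm ar (snd e)" and B: "satisfies B e"
  shows "satisfies C e"
  unfolding satisfies_def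
proof (intro allI impI)
  fix \<rho> :: "nat \<Rightarrow> _" assume \<rho>: "\<forall>n. \<rho> n \<in> carrier C"
  define \<rho>' where "\<rho>' = inv_into (carrier B) \<kappa> \<circ> \<rho>"
  have \<rho>': "\<forall>n. \<rho>' n \<in> carrier B" "(\<lambda>n. \<kappa> (\<rho>' n)) = \<rho>"
    using \<rho> onto by (auto simp: \<rho>'_def inv_into_into f_inv_into_f)
  then show "eval C \<rho> (fst e) = eval C \<rho> (snd e)"
    using eval_hom[OF h alg \<rho>'(1) wf(1)] eval_hom[OF h alg \<rho>'(1) wf(2)] B \<rho>'
    unfolding satisfies_def by metis
qed

lemma subalg_hom_image:
  assumes alg: "algebra ar A" and h: "hom ar \<kappa> A C"
  shows "subalg ar (\<kappa> ` carrier A) C"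
  unfolding subalg_def
proof (intro conjI allI impI)
  show "\<kappa> ` carrier A \<subseteq> carrier C" using h unfolding hom_def by blast
  fix f ys assume l: "length ys = ar f" "set ys \<subseteq> \<kappa> ` carrier A"
  let ?xs = "map (inv_into (carrier A) \<kappa>) ys"
  have "map \<kappa> ?xs = ys"
    using l(2) by (induction ys) (auto simp: f_inv_into_f)
  have "set ?xs \<subseteq> carrier A"
    using l(2) by (auto simp: inv_into_into)
  have "\<kappa> (ops A f ?xs) = ops C f (map \<kappa> ?xs)"
    using h l(1) \<open>set ?xs \<subseteq> carrier A\<close> unfolding hom_def by simp
  then have "ops C f ys = \<kappa> (ops A f ?xs)"
    using \<open>map \<kappa> ?xs = ys\<close> by simp
  then show "ops C f ys \<in> \<kappa> ` carrier A"
    using algebra_closed[OF alg] l(1) \<open>set ?xs \<subseteq> carrier A\<close> by simp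
qed

lemma algebra_hom_onto:
  assumes "algebra ar B" "hom ar \<kappa> B C" "\<kappa> ` carrier B = carrier C"
  shows "algebra ar C"
  using subalg_hom_image[OF assms(1,2)] assms(3) by (simp add: algebra_def subalg_def)

definition restr_not_inj_above :: "('f \<Rightarrow> nat) \<Rightarrow> ('f, 'a) alg \<Rightarrow> ('a \<times> 'a) set \<Rightarrow> 'a set \<Rightarrow> bool" where
  "restr_not_inj_above ar B \<psi> S \<longleftrightarrow>
    (\<exists>\<theta> \<phi>. congruence ar B \<theta> \<and> congruence ar B \<phi> \<and> \<psi> \<subseteq> \<theta> \<and> \<psi> \<subseteq> \<phi> \<and> \<theta> \<noteq> \<phi> \<and>
      restr \<theta> S = restr \<phi> S)"

text \<open>Let \<open>\<kappa>\<close> be a quotient map of \<open>\<Phi>\<close> and let \<open>\<sigma>\<close> pick a point of \<open>f ` carrier A\<close> in every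
  \<open>\<Theta>\<close>-class. Since \<open>\<Theta>\<close> and \<open>\<Phi>\<close> agree on \<open>f ` carrier A\<close>, both \<open>\<kappa>\<close> and \<open>\<kappa> \<circ> \<sigma>\<close> are homomorphisms,
  and they agree on \<open>f ` carrier A\<close>; as \<open>f\<close> is an epimorphism they agree everywhere, which
  forces \<open>\<Theta> = \<Phi>\<close>.\<close>

lemma epi_congruences_eq:
  fixes f :: "'a \<Rightarrow> 'b" and K :: "('f, 'c) alg \<Rightarrow> bool"
  assumes alg: "algebra ar B" and cnt: "countable (carrier B)" and inf: "infinite (UNIV :: 'c set)"
    and K: "\<And>(C :: ('f, 'c) alg) \<kappa>. hom ar \<kappa> B C \<Longrightarrow> \<kappa> ` carrier B = carrier C \<Longrightarrow> K C"
    and epi: "epi ar K f A B" and S: "subalg ar (f ` carrier A) B"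
    and \<Theta>: "congruence ar B \<Theta>" and \<Phi>: "congruence ar B \<Phi>"
    and agree: "restr \<Theta> (f ` carrier A) = restr \<Phi> (f ` carrier A)"
    and dense: "saturation \<Theta> (f ` carrier A) = carrier B"
  shows "\<Theta> = \<Phi>"
proof -
  let ?S = "f ` carrier A"
  have e\<Theta>: "equiv (carrier B) \<Theta>" and e\<Phi>: "equiv (carrier B) \<Phi>"
    using \<Theta> \<Phi> by (simp_all add: congruence_equiv)
  obtain \<kappa> :: "'b \<Rightarrow> 'c" where ker: "\<And>x y. x \<in> carrier B \<Longrightarrow> y \<in> carrier B \<Longrightarrow> \<kappa> x = \<kappa> y \<longleftrightarrow> (x, y) \<in> \<Phi>"
    using quotient_injection[OF cnt e\<Phi> inf] by blast
  have h\<kappa>: "hom ar \<kappa> B (image_alg B \<kappa>)" by (rule hom_image_alg[OF alg \<Phi> ker])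
  have KC: "K (image_alg B \<kappa>)" using K[OF h\<kappa>] by (simp add: image_alg_def)
  have "\<forall>x\<in>carrier B. \<exists>s. s \<in> ?S \<and> (x, s) \<in> \<Theta>"
    using dense unfolding saturation_def by blast
  then obtain \<sigma> where \<sigma>: "\<forall>x\<in>carrier B. \<sigma> x \<in> ?S \<and> (x, \<sigma> x) \<in> \<Theta>"
    by (rule bchoice[THEN exE])
  have SB: "?S \<subseteq> carrier B" using subalg_subset[OF S] .
  have on_S: "(s, s') \<in> \<Theta> \<longleftrightarrow> (s, s') \<in> \<Phi>" if "s \<in> ?S" "s' \<in> ?S" for s s'
    using agree that unfolding restr_def by blast
  have sym\<Theta>: "\<And>x y. (x, y) \<in> \<Theta> \<Longrightarrow> (y, x) \<in> \<Theta>"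
    and trans\<Theta>: "\<And>x y z. (x, y) \<in> \<Theta> \<Longrightarrow> (y, z) \<in> \<Theta> \<Longrightarrow> (x, z) \<in> \<Theta>"
    using e\<Theta> by (meson equiv_def symD, meson equiv_def transD)
  have \<Theta>_\<sigma>: "(x, y) \<in> \<Theta> \<longleftrightarrow> (\<sigma> x, \<sigma> y) \<in> \<Theta>" if "x \<in> carrier B" "y \<in> carrier B" for x y
    using \<sigma> that sym\<Theta> trans\<Theta> by meson
  have h\<kappa>\<sigma>: "hom ar (\<kappa> \<circ> \<sigma>) B (image_alg B \<kappa>)"
  proof (rule hom_image_alg_comp[OF alg \<Phi> ker])
    show "\<And>x. x \<in> carrier B \<Longrightarrow> \<sigma> x \<in> carrier B" using \<sigma> SB by blast
    fix g xs assume l: "length xs = ar g" "set xs \<subseteq> carrier B"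
    have "(ops B g xs, ops B g (map \<sigma> xs)) \<in> \<Theta>"
      using congruenceD[OF \<Theta>, of xs g "map \<sigma> xs"] l \<sigma>
      by (auto simp: list_all2_map2 list_all2_same)
    moreover have "(ops B g xs, \<sigma> (ops B g xs)) \<in> \<Theta>"
      using \<sigma> algebra_closed[OF alg l] by blast
    ultimately have "(ops B g (map \<sigma> xs), \<sigma> (ops B g xs)) \<in> \<Theta>"
      using sym\<Theta> trans\<Theta> by blast
    moreover have "ops B g (map \<sigma> xs) \<in> ?S"
      using subalg_closed[OF S, of "map \<sigma> xs" g] l \<sigma> by auto
    ultimately show "(ops B g (map \<sigma> xs), \<sigma> (ops B g xs)) \<in> \<Phi>"
      using on_S \<sigma> algebra_closed[OF alg l] by blast
  qed
  have agree_f: "\<kappa> (f a) = (\<kappa> \<circ> \<sigma>) (f a)" if "a \<in> carrier A" for a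
  proof -
    have fa: "f a \<in> ?S" "f a \<in> carrier B" using that SB by auto
    then have "(f a, \<sigma> (f a)) \<in> \<Phi>" using on_S \<sigma> by blast
    moreover have "\<sigma> (f a) \<in> carrier B" using \<sigma> fa SB by blast
    ultimately show ?thesis using ker[OF fa(2)] by simp
  qed
  have "\<kappa> x = (\<kappa> \<circ> \<sigma>) x" if "x \<in> carrier B" for x
    using epi[unfolded epi_def, THEN conjunct2, rule_format, OF KC h\<kappa> h\<kappa>\<sigma> agree_f that] .
  then have \<kappa>\<sigma>: "\<forall>x\<in>carrier B. \<kappa> x = \<kappa> (\<sigma> x)" by simp
  have "(x, y) \<in> \<Phi> \<longleftrightarrow> (x, y) \<in> \<Theta>" if "x \<in> carrier B" "y \<in> carrier B" for x y
  proof -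
    have "(x, y) \<in> \<Phi> \<longleftrightarrow> \<kappa> x = \<kappa> y" using ker[OF that] by simp
    also have "\<dots> \<longleftrightarrow> \<kappa> (\<sigma> x) = \<kappa> (\<sigma> y)"
      using \<kappa>\<sigma> that by simp
    also have "\<dots> \<longleftrightarrow> (\<sigma> x, \<sigma> y) \<in> \<Theta>"
      using ker[of "\<sigma> x" "\<sigma> y"] on_S[of "\<sigma> x" "\<sigma> y"] \<sigma> that SB by auto
    also have "\<dots> \<longleftrightarrow> (x, y) \<in> \<Theta>" using \<Theta>_\<sigma> that by simp
    finally show ?thesis .
  qed
  then show "\<Theta> = \<Phi>"
    using equiv_type[OF e\<Theta>] equiv_type[OF e\<Phi>] by (intro subset_antisym subrelI) blast+
qed

lemma epi_surjective:
  fixes f :: "'a \<Rightarrow> 'b" and B :: "('f::countable, 'b) alg" and K :: "('f, 'c) alg \<Rightarrow> bool"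
  assumes algA: "algebra ar A" and alg: "algebra ar B" and fg: "fin_gen ar B"
    and inf: "infinite (UNIV :: 'c set)"
    and K: "\<And>(C :: ('f, 'c) alg) \<kappa>. hom ar \<kappa> B C \<Longrightarrow> \<kappa> ` carrier B = carrier C \<Longrightarrow> K C"
    and epi: "epi ar K f A B"
    and split: "\<And>\<psi> S. congruence ar B \<psi> \<Longrightarrow> subalg ar S B \<Longrightarrow> saturation \<psi> S \<noteq> carrier B \<Longrightarrow>
      restr_not_inj_above ar B \<psi> S"
  shows "f ` carrier A = carrier B"
proof (rule ccontr)
  let ?S = "f ` carrier A"
  assume "?S \<noteq> carrier B"
  have S: "subalg ar ?S B" using subalg_hom_image[OF algA] epi unfolding epi_def by blast
  obtain \<psi> where \<psi>: "congruence ar B \<psi>" "saturation \<psi> ?S \<noteq> carrier B"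
    and max: "\<And>\<theta>. congruence ar B \<theta> \<Longrightarrow> \<psi> \<subseteq> \<theta> \<Longrightarrow> \<theta> \<noteq> \<psi> \<Longrightarrow> saturation \<theta> ?S = carrier B"
    using maximal_congruence_saturation[OF alg fg S \<open>?S \<noteq> carrier B\<close>] by blast
  obtain \<theta> \<phi> where \<theta>\<phi>: "congruence ar B \<theta>" "congruence ar B \<phi>" "\<psi> \<subseteq> \<theta>" "\<psi> \<subseteq> \<phi>" "\<theta> \<noteq> \<phi>"
    "restr \<theta> ?S = restr \<phi> ?S"
    using split[OF \<psi>(1) S \<psi>(2)] unfolding restr_not_inj_above_def by blast
  have eq: "\<theta>' = \<phi>'"
    if "congruence ar B \<theta>'" "congruence ar B \<phi>'" "restr \<theta>' ?S = restr \<phi>' ?S" "\<psi> \<subseteq> \<theta>'" "\<theta>' \<noteq> \<psi>"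
    for \<theta>' \<phi>'
  proof (rule epi_congruences_eq[OF alg countable_carrier_if_fin_gen[OF alg fg] inf _ epi S that(1-3)])
    show "\<And>C \<kappa>. hom ar \<kappa> B C \<Longrightarrow> \<kappa> ` carrier B = carrier C \<Longrightarrow> K C" by (rule K)
    show "saturation \<theta>' ?S = carrier B" by (rule max[OF that(1,4,5)])
  qed
  show False
  proof (cases "\<theta> = \<psi>")
    case True
    then show False using eq[OF \<theta>\<phi>(2,1) \<theta>\<phi>(6)[symmetric] \<theta>\<phi>(4)] \<theta>\<phi>(5) by blast
  next
    case False
    then show False using eq[OF \<theta>\<phi>(1,2,6,3)] \<theta>\<phi>(5) by blast
  qed
qed

section \<open>Heyting algebras and implicative semilattices as algebras\<close>

instance hsym :: countable by countable_datatype
instance isym :: countable by countable_datatype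

definition hmeet :: "(hsym, 'a) alg \<Rightarrow> 'a \<Rightarrow> 'a \<Rightarrow> 'a" where "hmeet B x y = ops B HMeet [x, y]"
definition hjoin :: "(hsym, 'a) alg \<Rightarrow> 'a \<Rightarrow> 'a \<Rightarrow> 'a" where "hjoin B x y = ops B HJoin [x, y]"
definition himp :: "(hsym, 'a) alg \<Rightarrow> 'a \<Rightarrow> 'a \<Rightarrow> 'a" where "himp B x y = ops B HImp [x, y]"
definition htop :: "(hsym, 'a) alg \<Rightarrow> 'a" where "htop B = ops B HTop []"
definition hbot :: "(hsym, 'a) alg \<Rightarrow> 'a" where "hbot B = ops B HBot []"

definition imeet :: "(isym, 'a) alg \<Rightarrow> 'a \<Rightarrow> 'a \<Rightarrow> 'a" where "imeet B x y = ops B IMeet [x, y]"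
definition iimp :: "(isym, 'a) alg \<Rightarrow> 'a \<Rightarrow> 'a \<Rightarrow> 'a" where "iimp B x y = ops B IImp [x, y]"
definition itop :: "(isym, 'a) alg \<Rightarrow> 'a" where "itop B = ops B ITop []"

lemma har_closed:
  assumes "algebra har B"
  shows "x \<in> carrier B \<Longrightarrow> y \<in> carrier B \<Longrightarrow> hmeet B x y \<in> carrier B"
    and "x \<in> carrier B \<Longrightarrow> y \<in> carrier B \<Longrightarrow> hjoin B x y \<in> carrier B"
    and "x \<in> carrier B \<Longrightarrow> y \<in> carrier B \<Longrightarrow> himp B x y \<in> carrier B"
    and "htop B \<in> carrier B" "hbot B \<in> carrier B"
  using algebra_closed[OF assms, of "[x, y]"] algebra_closed[OF assms, of "[]"]
  by (simp_all add: hmeet_def hjoin_def himp_def htop_def hbot_def)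

lemma iar_closed:
  assumes "algebra iar B"
  shows "x \<in> carrier B \<Longrightarrow> y \<in> carrier B \<Longrightarrow> imeet B x y \<in> carrier B"
    and "x \<in> carrier B \<Longrightarrow> y \<in> carrier B \<Longrightarrow> iimp B x y \<in> carrier B"
    and "itop B \<in> carrier B"
  using algebra_closed[OF assms, of "[x, y]"] algebra_closed[OF assms, of "[]"]
  by (simp_all add: imeet_def iimp_def itop_def)

lemma heyting_algebra_iff:
  "heyting_algebra B \<longleftrightarrow> algebra har B \<and>
    implicative_lattice_on (carrier B) (hmeet B) (htop B) (himp B) (hjoin B) \<and>
    (\<forall>x\<in>carrier B. hmeet B (hbot B) x = hbot B)"
proof
  assume B: "heyting_algebra B"
  then have alg: "algebra har B" by (simp add: heyting_algebra_def)
  let ?A = "carrier B" and ?M = "hmeet B" and ?J = "hjoin B"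
  note unfold = heyting_algebra_def Let_def hmeet_def hjoin_def himp_def htop_def hbot_def
  have assoc: "?M x (?M y w) = ?M (?M x y) w" and join_assoc: "?J x (?J y w) = ?J (?J x y) w"
    and res: "?M (?M w x) y = ?M w x \<longleftrightarrow> ?M w (himp B x y) = w"
    if "x \<in> ?A" "y \<in> ?A" "w \<in> ?A" for x y w
    using B that unfolding unfold by blast+
  have comm: "?M x y = ?M y x" and join_comm: "?J x y = ?J y x"
    and absorb: "?M x (?J x y) = x" "?J x (?M x y) = x"
    if "x \<in> ?A" "y \<in> ?A" for x y
    using B that unfolding unfold by blast+
  have bot: "?M (hbot B) x = hbot B" and top: "?M (htop B) x = x" if "x \<in> ?A" for x
    using B that unfolding unfold by blast+
  have idem: "?M x x = x" if "x \<in> ?A" for x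
    using absorb(1)[OF that har_closed(1)[OF alg that that]] absorb(2)[OF that that] by simp
  interpret semilattice_top_on ?A ?M "htop B"
    by unfold_locales (fact har_closed[OF alg] assoc comm idem top)+
  interpret implicative_semilattice_on ?A ?M "htop B" "himp B"
    by unfold_locales (simp_all add: har_closed[OF alg] res le_def)
  have "implicative_lattice_on ?A ?M (htop B) (himp B) ?J"
    by unfold_locales (fact har_closed[OF alg] join_assoc join_comm absorb)+
  then show "algebra har B \<and> implicative_lattice_on ?A ?M (htop B) (himp B) ?J \<and>
    (\<forall>x\<in>?A. ?M (hbot B) x = hbot B)"
    using alg bot by blast
next
  assume "algebra har B \<and> implicative_lattice_on (carrier B) (hmeet B) (htop B) (himp B) (hjoin B) \<and>
    (\<forall>x\<in>carrier B. hmeet B (hbot B) x = hbot B)"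
  then have alg: "algebra har B" and bot: "\<forall>x\<in>carrier B. hmeet B (hbot B) x = hbot B"
    and "implicative_lattice_on (carrier B) (hmeet B) (htop B) (himp B) (hjoin B)" by blast+
  then interpret implicative_lattice_on "carrier B" "hmeet B" "htop B" "himp B" "hjoin B"
    by blast
  show "heyting_algebra B"
    unfolding heyting_algebra_def Let_def
    using alg bot meet_assoc join_assoc meet_comm join_comm meet_join_absorb join_meet_absorb top_meet
      residuation[unfolded le_def]
    by (simp add: hmeet_def hjoin_def himp_def htop_def hbot_def)
qed

lemma implicative_semilattice_iff:
  "implicative_semilattice B \<longleftrightarrow>
    algebra iar B \<and> implicative_semilattice_on (carrier B) (imeet B) (itop B) (iimp B)"
proof
  assume B: "implicative_semilattice B"
  then have alg: "algebra iar B" by (simp add: implicative_semilattice_def)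
  let ?A = "carrier B" and ?M = "imeet B"
  note unfold = implicative_semilattice_def Let_def imeet_def iimp_def itop_def
  have assoc: "?M x (?M y w) = ?M (?M x y) w"
    and res: "?M (?M w x) y = ?M w x \<longleftrightarrow> ?M w (iimp B x y) = w"
    if "x \<in> ?A" "y \<in> ?A" "w \<in> ?A" for x y w
    using B that unfolding unfold by blast+
  have comm: "?M x y = ?M y x" if "x \<in> ?A" "y \<in> ?A" for x y
    using B that unfolding unfold by blast
  have idem: "?M x x = x" and top: "?M (itop B) x = x" if "x \<in> ?A" for x
    using B that unfolding unfold by blast+
  interpret semilattice_top_on ?A ?M "itop B"
    by unfold_locales (fact iar_closed[OF alg] assoc comm idem top)+
  have "implicative_semilattice_on ?A ?M (itop B) (iimp B)"
    by unfold_locales (simp_all add: iar_closed[OF alg] res le_def)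
  then show "algebra iar B \<and> implicative_semilattice_on ?A ?M (itop B) (iimp B)"
    using alg by blast
next
  assume "algebra iar B \<and> implicative_semilattice_on (carrier B) (imeet B) (itop B) (iimp B)"
  then have alg: "algebra iar B"
    and "implicative_semilattice_on (carrier B) (imeet B) (itop B) (iimp B)" by blast+
  then interpret implicative_semilattice_on "carrier B" "imeet B" "itop B" "iimp B"
    by blast
  show "implicative_semilattice B"
    unfolding implicative_semilattice_def Let_def
    using alg meet_assoc meet_comm meet_idem top_meet residuation[unfolded le_def]
    by (simp add: imeet_def iimp_def itop_def)
qed

lemma congruence_har_iff:
  assumes "algebra har B"
  shows "congruence har B \<theta> \<longleftrightarrow>
    equiv (carrier B) \<theta> \<and> compatible \<theta> (hmeet B) \<and> compatible \<theta> (hjoin B) \<and> compatible \<theta> (himp B)"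
proof -
  have ar: "har f = 0 \<or> har f = 2" for f by (cases f) simp_all
  have "(\<forall>f. har f = 2 \<longrightarrow> compatible \<theta> (\<lambda>x y. ops B f [x, y])) \<longleftrightarrow>
    compatible \<theta> (hmeet B) \<and> compatible \<theta> (hjoin B) \<and> compatible \<theta> (himp B)"
  proof
    assume "\<forall>f. har f = 2 \<longrightarrow> compatible \<theta> (\<lambda>x y. ops B f [x, y])"
    then show "compatible \<theta> (hmeet B) \<and> compatible \<theta> (hjoin B) \<and> compatible \<theta> (himp B)"
      by (simp add: hmeet_def[abs_def] hjoin_def[abs_def] himp_def[abs_def])
  next
    assume "compatible \<theta> (hmeet B) \<and> compatible \<theta> (hjoin B) \<and> compatible \<theta> (himp B)"
    then show "\<forall>f. har f = 2 \<longrightarrow> compatible \<theta> (\<lambda>x y. ops B f [x, y])"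
      by (intro allI, case_tac f) (simp_all add: hmeet_def[abs_def] hjoin_def[abs_def] himp_def[abs_def])
  qed
  then show ?thesis using congruence_iff_compatible[OF assms ar] by simp
qed

lemma congruence_iar_iff:
  assumes "algebra iar B"
  shows "congruence iar B \<theta> \<longleftrightarrow> equiv (carrier B) \<theta> \<and> compatible \<theta> (imeet B) \<and> compatible \<theta> (iimp B)"
proof -
  have ar: "iar f = 0 \<or> iar f = 2" for f by (cases f) simp_all
  have "(\<forall>f. iar f = 2 \<longrightarrow> compatible \<theta> (\<lambda>x y. ops B f [x, y])) \<longleftrightarrow>
    compatible \<theta> (imeet B) \<and> compatible \<theta> (iimp B)"
  proof
    assume "\<forall>f. iar f = 2 \<longrightarrow> compatible \<theta> (\<lambda>x y. ops B f [x, y])"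
    then show "compatible \<theta> (imeet B) \<and> compatible \<theta> (iimp B)"
      by (simp add: imeet_def[abs_def] iimp_def[abs_def])
  next
    assume "compatible \<theta> (imeet B) \<and> compatible \<theta> (iimp B)"
    then show "\<forall>f. iar f = 2 \<longrightarrow> compatible \<theta> (\<lambda>x y. ops B f [x, y])"
      by (intro allI, case_tac f) (simp_all add: imeet_def[abs_def] iimp_def[abs_def])
  qed
  then show ?thesis using congruence_iff_compatible[OF assms ar] by simp
qed

lemma heyting_restr_not_inj_above:
  assumes B: "heyting_algebra B" and \<psi>: "congruence har B \<psi>" and S: "subalg har S B"
    and proper: "saturation \<psi> S \<noteq> carrier B"
  shows "restr_not_inj_above har B \<psi> S"
proof -
  have alg: "algebra har B"
    and "implicative_lattice_on (carrier B) (hmeet B) (htop B) (himp B) (hjoin B)"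
    using B by (simp_all add: heyting_algebra_iff)
  then interpret implicative_lattice_on "carrier B" "hmeet B" "htop B" "himp B" "hjoin B" by blast
  have cong: "cong \<psi>" and join: "compatible \<psi> (hjoin B)"
    using \<psi> by (simp_all add: congruence_har_iff[OF alg] cong_def)
  have sub: "subuniverse S"
    unfolding subuniverse_def
    using subalg_subset[OF S] subalg_closed[OF S, of "[_, _]" HMeet] subalg_closed[OF S, of "[_, _]" HImp]
      subalg_closed[OF S, of "[]" HTop]
    by (simp add: hmeet_def himp_def htop_def)
  obtain b where b: "b \<in> carrier B" "\<forall>s\<in>S. (b, s) \<notin> \<psi>"
    using proper saturation_subset[OF congruence_equiv[OF \<psi>]] unfolding saturation_def by blast
  have "congruence har B (collapse \<psi> b)" "congruence har B (collapse_over \<psi> S b)"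
    using cong_collapse[OF cong b(1)] cong_collapse_over[OF cong sub b(1)]
      compatible_join_collapse[OF cong join b(1)] compatible_join_collapse_over[OF cong join sub b(1)]
    by (simp_all add: congruence_har_iff[OF alg] cong_def)
  then show ?thesis
    unfolding restr_not_inj_above_def
    using subset_collapse[OF cong b(1)] subset_collapse_over[OF cong sub b(1)]
      collapse_ne_collapse_over[OF cong sub b] restr_collapse_over[OF cong sub b(1)] by blast
qed

lemma implicative_semilattice_restr_not_inj_above:
  assumes B: "implicative_semilattice B" and \<psi>: "congruence iar B \<psi>" and S: "subalg iar S B"
    and proper: "saturation \<psi> S \<noteq> carrier B"
  shows "restr_not_inj_above iar B \<psi> S"
proof -
  have alg: "algebra iar B"
    and "implicative_semilattice_on (carrier B) (imeet B) (itop B) (iimp B)"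
    using B by (simp_all add: implicative_semilattice_iff)
  then interpret implicative_semilattice_on "carrier B" "imeet B" "itop B" "iimp B" by blast
  have cong: "cong \<psi>"
    using \<psi> by (simp add: congruence_iar_iff[OF alg] cong_def)
  have sub: "subuniverse S"
    unfolding subuniverse_def
    using subalg_subset[OF S] subalg_closed[OF S, of "[_, _]" IMeet] subalg_closed[OF S, of "[_, _]" IImp]
      subalg_closed[OF S, of "[]" ITop]
    by (simp add: imeet_def iimp_def itop_def)
  obtain b where b: "b \<in> carrier B" "\<forall>s\<in>S. (b, s) \<notin> \<psi>"
    using proper saturation_subset[OF congruence_equiv[OF \<psi>]] unfolding saturation_def by blast
  have "congruence iar B (collapse \<psi> b)" "congruence iar B (collapse_over \<psi> S b)"
    using cong_collapse[OF cong b(1)] cong_collapse_over[OF cong sub b(1)]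
    by (simp_all add: congruence_iar_iff[OF alg] cong_def)
  then show ?thesis
    unfolding restr_not_inj_above_def
    using subset_collapse[OF cong b(1)] subset_collapse_over[OF cong sub b(1)]
      collapse_ne_collapse_over[OF cong sub b] restr_collapse_over[OF cong sub b(1)] by blast
qed

section \<open>Equational bases\<close>

definition isl_identities :: "('a \<Rightarrow> 'a \<Rightarrow> 'a) \<Rightarrow> 'a \<Rightarrow> ('a \<Rightarrow> 'a \<Rightarrow> 'a) \<Rightarrow> 'a \<Rightarrow> 'a \<Rightarrow> 'a \<Rightarrow> bool" where
  "isl_identities M u I x y w \<longleftrightarrow>
    M x (M y w) = M (M x y) w \<and> M x y = M y x \<and> M x x = x \<and> M u x = x \<and>
    M x (I x y) = M x y \<and> M y (I x y) = y \<and> I x (M y w) = M (I x y) (I x w) \<and> I x x = u"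

lemma (in implicative_semilattice_on) isl_identities_hold:
  "x \<in> A \<Longrightarrow> y \<in> A \<Longrightarrow> w \<in> A \<Longrightarrow> isl_identities (\<sqinter>) \<top> (\<leadsto>) x y w"
  unfolding isl_identities_def using meet_comm[of x y]
  by (simp add: meet_assoc meet_idem top_meet meet_imp meet_imp_absorb imp_meet_distrib imp_self)

lemma implicative_semilattice_on_iff_identities:
  "implicative_semilattice_on A M u I \<longleftrightarrow>
    u \<in> A \<and> (\<forall>x\<in>A. \<forall>y\<in>A. M x y \<in> A \<and> I x y \<in> A) \<and>
    (\<forall>x\<in>A. \<forall>y\<in>A. \<forall>w\<in>A. isl_identities M u I x y w)"
proof
  assume "implicative_semilattice_on A M u I"
  then interpret implicative_semilattice_on A M u I .
  show "u \<in> A \<and> (\<forall>x\<in>A. \<forall>y\<in>A. M x y \<in> A \<and> I x y \<in> A) \<and>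
    (\<forall>x\<in>A. \<forall>y\<in>A. \<forall>w\<in>A. isl_identities M u I x y w)"
    by (simp add: top_closed meet_closed imp_closed isl_identities_hold)
next
  assume "u \<in> A \<and> (\<forall>x\<in>A. \<forall>y\<in>A. M x y \<in> A \<and> I x y \<in> A) \<and>
    (\<forall>x\<in>A. \<forall>y\<in>A. \<forall>w\<in>A. isl_identities M u I x y w)"
  then have u: "u \<in> A" and closed: "\<And>x y. x \<in> A \<Longrightarrow> y \<in> A \<Longrightarrow> M x y \<in> A \<and> I x y \<in> A"
    and ids: "\<And>x y w. x \<in> A \<Longrightarrow> y \<in> A \<Longrightarrow> w \<in> A \<Longrightarrow> isl_identities M u I x y w"
    by blast+
  interpret semilattice_top_on A M u
  proof
    fix x y w assume "x \<in> A" "y \<in> A" "w \<in> A"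
    then show "M x (M y w) = M (M x y) w" using ids unfolding isl_identities_def by blast
  next
    fix x y assume "x \<in> A" "y \<in> A"
    then show "M x y = M y x" using ids[of x y x] unfolding isl_identities_def by blast
  next
    fix x assume "x \<in> A"
    then show "M x x = x" "M u x = x" using ids[of x x x] unfolding isl_identities_def by blast+
  qed (use closed u in blast)+
  show "implicative_semilattice_on A M u I"
  proof (rule implicative_semilattice_onI)
    fix x y w assume "x \<in> A" "y \<in> A" "w \<in> A"
    then show "I x (M y w) = M (I x y) (I x w)" using ids unfolding isl_identities_def by blast
  next
    fix x y assume "x \<in> A" "y \<in> A"
    then show "I x y \<in> A" "M x (I x y) = M x y" "M y (I x y) = y"
      using closed ids[of x y x] unfolding isl_identities_def by blast+
  next
    fix x assume "x \<in> A"
    then show "I x x = u" using ids[of x x x] unfolding isl_identities_def by blast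
  qed
qed

lemma satisfies_all_iff_identities:
  assumes "\<And>\<rho>. (\<forall>e\<in>E. eval B \<rho> (fst e) = eval B \<rho> (snd e)) \<longleftrightarrow> P (\<rho> 0) (\<rho> 1) (\<rho> 2)"
  shows "(\<forall>e\<in>E. satisfies B e) \<longleftrightarrow> (\<forall>x\<in>carrier B. \<forall>y\<in>carrier B. \<forall>w\<in>carrier B. P x y w)"
proof
  assume sat: "\<forall>e\<in>E. satisfies B e"
  show "\<forall>x\<in>carrier B. \<forall>y\<in>carrier B. \<forall>w\<in>carrier B. P x y w"
  proof (intro ballI)
    fix x y w assume xyw: "x \<in> carrier B" "y \<in> carrier B" "w \<in> carrier B"
    define \<rho> where "\<rho> n = (if n = 0 then x else if n = 1 then y else w)" for n :: nat
    have "\<forall>n. \<rho> n \<in> carrier B" using xyw by (simp add: \<rho>_def)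
    then have "\<forall>e\<in>E. eval B \<rho> (fst e) = eval B \<rho> (snd e)"
      using sat by (simp add: satisfies_def)
    then show "P x y w" using assms[of \<rho>] by (simp add: \<rho>_def)
  qed
next
  assume "\<forall>x\<in>carrier B. \<forall>y\<in>carrier B. \<forall>w\<in>carrier B. P x y w"
  then show "\<forall>e\<in>E. satisfies B e"
    using assms unfolding satisfies_def by blast
qed

lemma satisfies_all_hom_onto:
  assumes "algebra ar B" "hom ar \<kappa> B C" "\<kappa> ` carrier B = carrier C" "wf_eqs ar E"
    and "\<forall>e\<in>E. satisfies B e"
  shows "\<forall>e\<in>E. satisfies C e"
  using assms satisfies_hom_image[OF assms(1-3)] unfolding wf_eqs_def by fastforce

definition isl_equations ::
  "('f trm \<Rightarrow> 'f trm \<Rightarrow> 'f trm) \<Rightarrow> 'f trm \<Rightarrow> ('f trm \<Rightarrow> 'f trm \<Rightarrow> 'f trm) \<Rightarrow> ('f trm \<times> 'f trm) set"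
  where
  "isl_equations m u i =
    (let x = TVar 0; y = TVar 1; w = TVar 2 in
     {(m x (m y w), m (m x y) w), (m x y, m y x), (m x x, x), (m u x, x),
      (m x (i x y), m x y), (m y (i x y), y), (i x (m y w), m (i x y) (i x w)), (i x x, u)})"

lemma eval_isl_equations:
  assumes "\<And>s t. eval B \<rho> (m s t) = M (eval B \<rho> s) (eval B \<rho> t)" "eval B \<rho> u = U"
    and "\<And>s t. eval B \<rho> (i s t) = I (eval B \<rho> s) (eval B \<rho> t)"
  shows "(\<forall>e\<in>isl_equations m u i. eval B \<rho> (fst e) = eval B \<rho> (snd e)) \<longleftrightarrow>
    isl_identities M U I (\<rho> 0) (\<rho> 1) (\<rho> 2)"
  by (simp add: isl_equations_def isl_identities_def assms Let_def)

definition IEQ :: "(isym trm \<times> isym trm) set" where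
  "IEQ = isl_equations (\<lambda>s t. TFn IMeet [s, t]) (TFn ITop []) (\<lambda>s t. TFn IImp [s, t])"

definition HEQ :: "(hsym trm \<times> hsym trm) set" where
  "HEQ =
    (let m = \<lambda>s t. TFn HMeet [s, t]; j = \<lambda>s t. TFn HJoin [s, t]; z = TFn HBot [];
         x = TVar 0; y = TVar 1; w = TVar 2 in
     isl_equations m (TFn HTop []) (\<lambda>s t. TFn HImp [s, t]) \<union>
     {(j x (j y w), j (j x y) w), (j x y, j y x), (m x (j x y), x), (j x (m x y), x), (m z x, z)})"

lemma IEQ_wf: "wf_eqs iar IEQ"
  by (simp add: wf_eqs_def IEQ_def isl_equations_def Let_def)

lemma HEQ_wf: "wf_eqs har HEQ"
  by (simp add: wf_eqs_def HEQ_def isl_equations_def Let_def)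

lemma implicative_semilattice_iff_IEQ:
  "implicative_semilattice B \<longleftrightarrow> algebra iar B \<and> (\<forall>e\<in>IEQ. satisfies B e)"
proof -
  have "(\<forall>e\<in>IEQ. satisfies B e) \<longleftrightarrow> (\<forall>x\<in>carrier B. \<forall>y\<in>carrier B. \<forall>w\<in>carrier B.
    isl_identities (imeet B) (itop B) (iimp B) x y w)"
    by (rule satisfies_all_iff_identities)
      (simp add: IEQ_def eval_isl_equations imeet_def[abs_def] iimp_def[abs_def] itop_def)
  then show ?thesis
    using iar_closed
    by (auto simp: implicative_semilattice_iff implicative_semilattice_on_iff_identities)
qed

lemma heyting_algebra_iff_HEQ:
  "heyting_algebra B \<longleftrightarrow> algebra har B \<and> (\<forall>e\<in>HEQ. satisfies B e)"
proof (cases "algebra har B")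
  case alg: True
  let ?A = "carrier B" and ?M = "hmeet B" and ?J = "hjoin B" and ?z = "hbot B"
  let ?lat = "\<lambda>x y w. ?J x (?J y w) = ?J (?J x y) w \<and> ?J x y = ?J y x \<and>
    ?M x (?J x y) = x \<and> ?J x (?M x y) = x \<and> ?M ?z x = ?z"
  let ?isl = "\<lambda>x y w. isl_identities ?M (htop B) (himp B) x y w"
  have "(\<forall>e\<in>HEQ. satisfies B e) \<longleftrightarrow> (\<forall>x\<in>?A. \<forall>y\<in>?A. \<forall>w\<in>?A. ?lat x y w \<and> ?isl x y w)"
    by (rule satisfies_all_iff_identities)
      (simp add: HEQ_def Let_def eval_isl_equations hmeet_def[abs_def] hjoin_def[abs_def]
        himp_def[abs_def] htop_def hbot_def)
  also have "\<dots> \<longleftrightarrow> (\<forall>x\<in>?A. \<forall>y\<in>?A. \<forall>w\<in>?A. ?lat x y w) \<and> (\<forall>x\<in>?A. \<forall>y\<in>?A. \<forall>w\<in>?A. ?isl x y w)"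
    by blast
  also have "(\<forall>x\<in>?A. \<forall>y\<in>?A. \<forall>w\<in>?A. ?lat x y w) \<longleftrightarrow>
    implicative_lattice_on_axioms ?A ?M ?J \<and> (\<forall>x\<in>?A. ?M ?z x = ?z)"
    by (auto simp: implicative_lattice_on_axioms_def har_closed[OF alg])
  also have "(\<forall>x\<in>?A. \<forall>y\<in>?A. \<forall>w\<in>?A. ?isl x y w) \<longleftrightarrow>
    implicative_semilattice_on ?A ?M (htop B) (himp B)"
    by (simp add: implicative_semilattice_on_iff_identities har_closed[OF alg])
  finally show ?thesis
    using alg by (auto simp: heyting_algebra_iff implicative_lattice_on_def)
qed (simp add: heyting_algebra_iff)

lemma HVar_hom_onto:
  assumes "wf_eqs har E" "HVar E B" "hom har \<kappa> B C" "\<kappa> ` carrier B = carrier C"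
  shows "HVar E C"
  using assms algebra_hom_onto[OF _ assms(3,4)] satisfies_all_hom_onto[OF _ assms(3,4)] HEQ_wf
  unfolding HVar_def heyting_algebra_iff_HEQ by blast

lemma IVar_hom_onto:
  assumes "wf_eqs iar E" "IVar E B" "hom iar \<kappa> B C" "\<kappa> ` carrier B = carrier C"
  shows "IVar E C"
  using assms algebra_hom_onto[OF _ assms(3,4)] satisfies_all_hom_onto[OF _ assms(3,4)] IEQ_wf
  unfolding IVar_def implicative_semilattice_iff_IEQ by blast

lemma heyting_proper_subalg_congruences:
  assumes B: "heyting_algebra B" and S: "subalg har S B" and proper: "S \<noteq> carrier B"
  shows "\<exists>\<theta> \<phi>. congruence har B \<theta> \<and> congruence har B \<phi> \<and> \<theta> \<noteq> \<phi> \<and> restr \<theta> S = restr \<phi> S"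
proof -
  have alg: "algebra har B" using B by (simp add: heyting_algebra_iff)
  have "saturation (Id_on (carrier B)) S \<noteq> carrier B"
    using saturation_Id_on[OF subalg_subset[OF S]] proper by simp
  then show ?thesis
    using heyting_restr_not_inj_above[OF B congruence_Id_on[OF alg] S] unfolding restr_not_inj_above_def by blast
qed

lemma implicative_semilattice_proper_subalg_congruences:
  assumes B: "implicative_semilattice B" and S: "subalg iar S B" and proper: "S \<noteq> carrier B"
  shows "\<exists>\<theta> \<phi>. congruence iar B \<theta> \<and> congruence iar B \<phi> \<and> \<theta> \<noteq> \<phi> \<and> restr \<theta> S = restr \<phi> S"
proof -
  have alg: "algebra iar B" using B by (simp add: implicative_semilattice_iff)
  have "saturation (Id_on (carrier B)) S \<noteq> carrier B"
    using saturation_Id_on[OF subalg_subset[OF S]] proper by simp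
  then show ?thesis
    using implicative_semilattice_restr_not_inj_above[OF B congruence_Id_on[OF alg] S] unfolding restr_not_inj_above_def by blast
qed

lemma HVar_epi_surjective:
  fixes A :: "(hsym, 'a) alg" and B :: "(hsym, 'b) alg"
  assumes "wf_eqs har E" "infinite (UNIV :: 'c set)" "HVar E A" "HVar E B" "fin_gen har B"
    and "epi har (HVar E :: (hsym, 'c) alg \<Rightarrow> bool) f A B"
  shows "f ` carrier A = carrier B"
proof (rule epi_surjective[OF _ _ assms(5,2) _ assms(6)])
  show "algebra har A" "algebra har B"
    using assms(3,4) by (simp_all add: HVar_def heyting_algebra_iff)
  show "\<And>C \<kappa>. hom har \<kappa> B C \<Longrightarrow> \<kappa> ` carrier B = carrier C \<Longrightarrow> HVar E C"
    using HVar_hom_onto[OF assms(1,4)] .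
  show "\<And>\<psi> S. congruence har B \<psi> \<Longrightarrow> subalg har S B \<Longrightarrow> saturation \<psi> S \<noteq> carrier B \<Longrightarrow>
      restr_not_inj_above har B \<psi> S"
    using heyting_restr_not_inj_above assms(4) unfolding HVar_def by blast
qed

lemma IVar_epi_surjective:
  fixes A :: "(isym, 'a) alg" and B :: "(isym, 'b) alg"
  assumes "wf_eqs iar E" "infinite (UNIV :: 'c set)" "IVar E A" "IVar E B" "fin_gen iar B"
    and "epi iar (IVar E :: (isym, 'c) alg \<Rightarrow> bool) f A B"
  shows "f ` carrier A = carrier B"
proof (rule epi_surjective[OF _ _ assms(5,2) _ assms(6)])
  show "algebra iar A" "algebra iar B"
    using assms(3,4) by (simp_all add: IVar_def implicative_semilattice_iff)
  show "\<And>C \<kappa>. hom iar \<kappa> B C \<Longrightarrow> \<kappa> ` carrier B = carrier C \<Longrightarrow> IVar E C"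
    using IVar_hom_onto[OF assms(1,4)] .
  show "\<And>\<psi> S. congruence iar B \<psi> \<Longrightarrow> subalg iar S B \<Longrightarrow> saturation \<psi> S \<noteq> carrier B \<Longrightarrow>
      restr_not_inj_above iar B \<psi> S"
    using implicative_semilattice_restr_not_inj_above assms(4) unfolding IVar_def by blast
qed

theorem mainTheorem18:
  fixes EH :: "(hsym trm \<times> hsym trm) set" and EI :: "(isym trm \<times> isym trm) set"
  assumes "wf_eqs har EH" and "wf_eqs iar EI" and "infinite (UNIV :: 'c set)"
  shows
   "(\<forall>(B :: (hsym, 'b) alg) S. HVar EH B \<and> subalg har S B \<and> S \<noteq> carrier B \<longrightarrow>
       (\<exists>\<theta> \<phi>. congruence har B \<theta> \<and> congruence har B \<phi> \<and> \<theta> \<noteq> \<phi> \<and> restr \<theta> S = restr \<phi> S))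
  \<and> (\<forall>(A :: (hsym, 'a) alg) (B :: (hsym, 'b) alg) f.
       HVar EH A \<and> HVar EH B \<and> fin_gen har A \<and> fin_gen har B \<and>
       epi har (HVar EH :: (hsym, 'c) alg \<Rightarrow> bool) f A B \<longrightarrow> f ` carrier A = carrier B)
  \<and> (\<forall>(B :: (isym, 'b) alg) S. IVar EI B \<and> subalg iar S B \<and> S \<noteq> carrier B \<longrightarrow>
       (\<exists>\<theta> \<phi>. congruence iar B \<theta> \<and> congruence iar B \<phi> \<and> \<theta> \<noteq> \<phi> \<and> restr \<theta> S = restr \<phi> S))
  \<and> (\<forall>(A :: (isym, 'a) alg) (B :: (isym, 'b) alg) f.
       IVar EI A \<and> IVar EI B \<and> fin_gen iar A \<and> fin_gen iar B \<and>
       epi iar (IVar EI :: (isym, 'c) alg \<Rightarrow> bool) f A B \<longrightarrow> f ` carrier A = carrier B)"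
proof (intro conjI allI impI)
  fix B :: "(hsym, 'b) alg" and S
  assume "HVar EH B \<and> subalg har S B \<and> S \<noteq> carrier B"
  then show "\<exists>\<theta> \<phi>. congruence har B \<theta> \<and> congruence har B \<phi> \<and> \<theta> \<noteq> \<phi> \<and> restr \<theta> S = restr \<phi> S"
    using heyting_proper_subalg_congruences unfolding HVar_def by blast
next
  fix A :: "(hsym, 'a) alg" and B :: "(hsym, 'b) alg" and f
  assume "HVar EH A \<and> HVar EH B \<and> fin_gen har A \<and> fin_gen har B \<and>
    epi har (HVar EH :: (hsym, 'c) alg \<Rightarrow> bool) f A B"
  then show "f ` carrier A = carrier B"
    using HVar_epi_surjective[OF assms(1,3)] by blast
next
  fix B :: "(isym, 'b) alg" and S
  assume "IVar EI B \<and> subalg iar S B \<and> S \<noteq> carrier B"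
  then show "\<exists>\<theta> \<phi>. congruence iar B \<theta> \<and> congruence iar B \<phi> \<and> \<theta> \<noteq> \<phi> \<and> restr \<theta> S = restr \<phi> S"
    using implicative_semilattice_proper_subalg_congruences unfolding IVar_def by blast
next
  fix A :: "(isym, 'a) alg" and B :: "(isym, 'b) alg" and f
  assume "IVar EI A \<and> IVar EI B \<and> fin_gen iar A \<and> fin_gen iar B \<and>
    epi iar (IVar EI :: (isym, 'c) alg \<Rightarrow> bool) f A B"
  then show "f ` carrier A = carrier B"
    using IVar_epi_surjective[OF assms(2,3)] by blast
qed

end
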